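(* Let $X$ be a smooth manifold, let $\mathcal{C}^\infty_X$ be the sheaf of germs of smooth $\mathbb{C}$-valued functions on $X$, let $(U,\phi)$ be a chart of $X$, and let $K\subseteq U$ be compact. Let $\mathcal{C}^\infty_X(K):=\varinjlim_{K\subseteq V}\mathcal{C}^\infty_X(V)$ (inductive limit over open $V\supseteq K$), endowed with the locally $m$-convex inductive limit topology. Then $\mathcal{C}^\infty_X(K)$ is a locally $m$-convex $Q$-algebra whose spectrum coincides with $K$.
   Context: Smooth manifolds are finite-dimensional and second countable. For each open $V$ with $K\subseteq V\subseteq U$, $\mathcal{C}^\infty_X(V)$ carries the Fréchet locally $m$-convex topology given by the seminorms $N_{m,C}(f)=\sup_{|p|\le m}\sup_{x\in C}|D^p(f\circ\phi^{-1})(\phi(x))|$, $C\subseteq V$ compact, $m\ge0$. The locally $m$-convex inductive limit topology on $\mathcal{C}^\infty_X(K)$ is the finest locally $m$-convex topology making all canonical maps $\mathcal{C}^\infty_X(V)\to\mathcal{C}^\infty_X(K)$ continuous. A topological algebra is a complex associative algebra that is a topological vector space with separately continuous multiplication; it is locally $m$-convex if its topology is given by a directed family of submultiplicative seminorms; a unital topological algebra is a $Q$-algebra if its group of invertible elements is open. The spectrum $\mathfrak{M}(\mathcal{A})$ of a commutative unital locally $m$-convex algebra is the set of continuous characters (nonzero multiplicative linear functionals) with the relative weak$^*$ topology; "coincides with $K$" means it is identified (homeomorphically) with $K$, points of $K$ corresponding to point evaluations. *)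

theory Defs
  imports "HOL-Analysis.Analysis"
begin

fun iter_pd :: "'n::euclidean_space list \<Rightarrow> ('n \<Rightarrow> 'b::real_normed_vector) \<Rightarrow> 'n \<Rightarrow> 'b" where
  "iter_pd [] g = g"
| "iter_pd (v # vs) g = (\<lambda>y. frechet_derivative (iter_pd vs g) (at y) v)"

definition smooth_on :: "'n::euclidean_space set \<Rightarrow> ('n \<Rightarrow> 'b::real_normed_vector) \<Rightarrow> bool" where
  "smooth_on S g \<longleftrightarrow> (\<forall>vs. set vs \<subseteq> Basis \<longrightarrow> iter_pd vs g differentiable_on S)"

definition is_chart :: "'a topology \<Rightarrow> 'a set \<Rightarrow> ('a \<Rightarrow> 'n::euclidean_space) \<Rightarrow> bool" where
  "is_chart X U \<phi> \<longleftrightarrow> openin X U \<and> open (\<phi> ` U) \<and>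
     homeomorphic_map (subtopology X U) (top_of_set (\<phi> ` U)) \<phi>"

definition smooth_atlas :: "'a topology \<Rightarrow> ('a set \<times> ('a \<Rightarrow> 'n::euclidean_space)) set \<Rightarrow> bool" where
  "smooth_atlas X Atl \<longleftrightarrow>
     (\<forall>(U,\<phi>)\<in>Atl. is_chart X U \<phi>) \<and>
     (\<Union>(U,\<phi>)\<in>Atl. U) = topspace X \<and>
     (\<forall>(U,\<phi>)\<in>Atl. \<forall>(W,\<psi>)\<in>Atl. smooth_on (\<phi> ` (U \<inter> W)) (\<psi> \<circ> inv_into U \<phi>))"

definition smooth_manifold :: "'a topology \<Rightarrow> ('a set \<times> ('a \<Rightarrow> 'n::euclidean_space)) set \<Rightarrow> bool" where
  "smooth_manifold X Atl \<longleftrightarrow> Hausdorff_space X \<and> second_countable X \<and> smooth_atlas X Atl"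

definition smooth_fun :: "'a topology \<Rightarrow> ('a set \<times> ('a \<Rightarrow> 'n::euclidean_space)) set \<Rightarrow> 'a set \<Rightarrow> ('a \<Rightarrow> complex) \<Rightarrow> bool" where
  "smooth_fun X Atl V f \<longleftrightarrow> openin X V \<and>
     (\<forall>(W,\<psi>)\<in>Atl. smooth_on (\<psi> ` (V \<inter> W)) (f \<circ> inv_into W \<psi>))"

definition Nsn :: "'a set \<Rightarrow> ('a \<Rightarrow> 'n::euclidean_space) \<Rightarrow> nat \<Rightarrow> 'a set \<Rightarrow> ('a \<Rightarrow> complex) \<Rightarrow> real" where
  "Nsn U \<phi> m C f = Sup (insert 0 {cmod (iter_pd vs (f \<circ> inv_into U \<phi>) (\<phi> x)) | vs x.
       set vs \<subseteq> Basis \<and> length vs \<le> m \<and> x \<in> C})"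

record 'g calg =
  ca_carrier :: "'g set"
  ca_add :: "'g \<Rightarrow> 'g \<Rightarrow> 'g"
  ca_mul :: "'g \<Rightarrow> 'g \<Rightarrow> 'g"
  ca_scale :: "complex \<Rightarrow> 'g \<Rightarrow> 'g"
  ca_one :: 'g

definition ca_zero :: "'g calg \<Rightarrow> 'g" where
  "ca_zero R = ca_scale R 0 (ca_one R)"

definition ca_sub :: "'g calg \<Rightarrow> 'g \<Rightarrow> 'g \<Rightarrow> 'g" where
  "ca_sub R a b = ca_add R a (ca_scale R (-1) b)"

definition comm_unital_calgebra :: "'g calg \<Rightarrow> bool" where
  "comm_unital_calgebra R \<longleftrightarrow> (let G = ca_carrier R; ad = ca_add R; mu = ca_mul R; sc = ca_scale R in
     ca_one R \<in> G \<and>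
     (\<forall>a\<in>G. \<forall>b\<in>G. ad a b \<in> G \<and> mu a b \<in> G) \<and> (\<forall>c. \<forall>a\<in>G. sc c a \<in> G) \<and>
     (\<forall>a\<in>G. \<forall>b\<in>G. \<forall>c\<in>G. ad (ad a b) c = ad a (ad b c) \<and> mu (mu a b) c = mu a (mu b c)
        \<and> mu a (ad b c) = ad (mu a b) (mu a c)) \<and>
     (\<forall>a\<in>G. \<forall>b\<in>G. ad a b = ad b a \<and> mu a b = mu b a) \<and>
     (\<forall>a\<in>G. ad a (ca_zero R) = a \<and> ad a (sc (-1) a) = ca_zero R \<and> mu (ca_one R) a = a) \<and>
     (\<forall>c d. \<forall>a\<in>G. sc c (sc d a) = sc (c * d) a \<and> sc (c + d) a = ad (sc c a) (sc d a)
        \<and> sc 1 a = a) \<and>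
     (\<forall>c. \<forall>a\<in>G. \<forall>b\<in>G. sc c (ad a b) = ad (sc c a) (sc c b) \<and> sc c (mu a b) = mu (sc c a) b))"

definition submult_seminorm :: "'g calg \<Rightarrow> ('g \<Rightarrow> real) \<Rightarrow> bool" where
  "submult_seminorm R p \<longleftrightarrow> (let G = ca_carrier R in
     (\<forall>a\<in>G. 0 \<le> p a) \<and>
     (\<forall>a\<in>G. \<forall>b\<in>G. p (ca_add R a b) \<le> p a + p b) \<and>
     (\<forall>c. \<forall>a\<in>G. p (ca_scale R c a) = cmod c * p a) \<and>
     (\<forall>a\<in>G. \<forall>b\<in>G. p (ca_mul R a b) \<le> p a * p b))"

definition seminorm_topology :: "'g calg \<Rightarrow> ('g \<Rightarrow> real) set \<Rightarrow> 'g topology" where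
  "seminorm_topology R P = topology_generated_by
     {{b \<in> ca_carrier R. p (ca_sub R b a) < e} | p a e. p \<in> P \<and> a \<in> ca_carrier R \<and> e > 0}"

definition topological_calgebra :: "'g calg \<Rightarrow> 'g topology \<Rightarrow> bool" where
  "topological_calgebra R T \<longleftrightarrow> comm_unital_calgebra R \<and> topspace T = ca_carrier R \<and>
     continuous_map (prod_topology T T) T (\<lambda>(a,b). ca_add R a b) \<and>
     continuous_map (prod_topology euclidean T) T (\<lambda>(c,a). ca_scale R c a) \<and>
     (\<forall>a\<in>ca_carrier R. continuous_map T T (ca_mul R a) \<and> continuous_map T T (\<lambda>b. ca_mul R b a))"

definition lmc_algebra :: "'g calg \<Rightarrow> 'g topology \<Rightarrow> bool" where
  "lmc_algebra R T \<longleftrightarrow> topological_calgebra R T \<and>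
     (\<exists>P. P \<noteq> {} \<and> (\<forall>p\<in>P. submult_seminorm R p) \<and>
        (\<forall>p\<in>P. \<forall>q\<in>P. \<exists>r\<in>P. \<forall>a\<in>ca_carrier R. p a \<le> r a \<and> q a \<le> r a) \<and>
        T = seminorm_topology R P)"

definition invertibles :: "'g calg \<Rightarrow> 'g set" where
  "invertibles R = {a \<in> ca_carrier R. \<exists>b\<in>ca_carrier R. ca_mul R a b = ca_one R \<and> ca_mul R b a = ca_one R}"

definition Q_algebra :: "'g calg \<Rightarrow> 'g topology \<Rightarrow> bool" where
  "Q_algebra R T \<longleftrightarrow> openin T (invertibles R)"

definition characters :: "'g calg \<Rightarrow> 'g topology \<Rightarrow> ('g \<Rightarrow> complex) set" where
  "characters R T = {ch. ch \<in> extensional (ca_carrier R) \<and> continuous_map T euclidean ch \<and>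
     (\<exists>a\<in>ca_carrier R. ch a \<noteq> 0) \<and>
     (\<forall>a\<in>ca_carrier R. \<forall>b\<in>ca_carrier R. ch (ca_add R a b) = ch a + ch b \<and>
        ch (ca_mul R a b) = ch a * ch b) \<and>
     (\<forall>c. \<forall>a\<in>ca_carrier R. ch (ca_scale R c a) = c * ch a)}"

text \<open>Spectrum with the relative weak-star (pointwise convergence) topology.\<close>
definition spectrum_top :: "'g calg \<Rightarrow> 'g topology \<Rightarrow> ('g \<Rightarrow> complex) topology" where
  "spectrum_top R T = subtopology (product_topology (\<lambda>_. euclidean) (ca_carrier R)) (characters R T)"

definition germ :: "'a topology \<Rightarrow> ('a set \<times> ('a \<Rightarrow> 'n::euclidean_space)) set \<Rightarrow> 'a set \<Rightarrow> 'a set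
    \<Rightarrow> ('a \<Rightarrow> complex) \<Rightarrow> ('a \<Rightarrow> complex) set" where
  "germ X Atl U K f = {g. \<exists>V. openin X V \<and> K \<subseteq> V \<and> V \<subseteq> U \<and> smooth_fun X Atl V g \<and>
       (\<forall>x\<in>V. g x = f x)}"

definition germ_rep :: "('a \<Rightarrow> complex) set \<Rightarrow> 'a \<Rightarrow> complex" where
  "germ_rep a = (SOME f. f \<in> a)"

text \<open>The algebra C-infinity_X(K) = inductive limit of C-infinity_X(V), K \<subseteq> V \<subseteq> U open.\<close>
definition germ_alg :: "'a topology \<Rightarrow> ('a set \<times> ('a \<Rightarrow> 'n::euclidean_space)) set \<Rightarrow> 'a set \<Rightarrow> 'a set
    \<Rightarrow> ('a \<Rightarrow> complex) set calg" where
  "germ_alg X Atl U K =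
    \<lparr> ca_carrier = {germ X Atl U K f | f. \<exists>V. openin X V \<and> K \<subseteq> V \<and> V \<subseteq> U \<and> smooth_fun X Atl V f},
      ca_add = (\<lambda>a b. germ X Atl U K (\<lambda>x. germ_rep a x + germ_rep b x)),
      ca_mul = (\<lambda>a b. germ X Atl U K (\<lambda>x. germ_rep a x * germ_rep b x)),
      ca_scale = (\<lambda>c a. germ X Atl U K (\<lambda>x. c * germ_rep a x)),
      ca_one = germ X Atl U K (\<lambda>x. 1) \<rparr>"

text \<open>The locally m-convex inductive limit topology: generated by all submultiplicative
  seminorms q on C-infinity_X(K) whose pullbacks q \<circ> \<pi>_V are continuous on the Frechet
  algebras C-infinity_X(V) (i.e. dominated by some c * N_{m,C}).\<close>
definition germ_top :: "'a topology \<Rightarrow> ('a set \<times> ('a \<Rightarrow> 'n::euclidean_space)) set \<Rightarrow> 'a set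
    \<Rightarrow> ('a \<Rightarrow> 'n) \<Rightarrow> 'a set \<Rightarrow> ('a \<Rightarrow> complex) set topology" where
  "germ_top X Atl U \<phi> K = seminorm_topology (germ_alg X Atl U K)
     {q. submult_seminorm (germ_alg X Atl U K) q \<and>
         (\<forall>V. openin X V \<and> K \<subseteq> V \<and> V \<subseteq> U \<longrightarrow>
            (\<exists>m C c. compactin X C \<and> C \<subseteq> V \<and>
               (\<forall>f. smooth_fun X Atl V f \<longrightarrow> q (germ X Atl U K f) \<le> c * Nsn U \<phi> m C f)))}"

definition point_eval :: "'a topology \<Rightarrow> ('a set \<times> ('a \<Rightarrow> 'n::euclidean_space)) set \<Rightarrow> 'a set \<Rightarrow> 'a set
    \<Rightarrow> 'a \<Rightarrow> ('a \<Rightarrow> complex) set \<Rightarrow> complex" where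
  "point_eval X Atl U K x = restrict (\<lambda>a. germ_rep a x) (ca_carrier (germ_alg X Atl U K))"

end

(*
  A topology given by submultiplicative seminorms
  always makes the algebra operations continuous, and the defining family is directed because
  the seminorms N_{m,C} grow with m and C; so the algebra is locally m-convex.

  The sup norm over K is one of the defining seminorms.  A germ is invertible exactly when it
  has no zero on K (invert a representative on a neighbourhood where it does not vanish), and
  |a| >= 1 / sup_K |a^-1| on K shows that a sup-norm ball around an invertible germ consists of
  invertible germs: the algebra is a Q-algebra.

  Point evaluations at x in K are continuous characters, and they separate points via the chart
  coordinates.  Conversely, the kernel of a continuous character ch has a common zero x in K:
  otherwise compactness of K gives b_1, ..., b_n in the kernel without common zero, and
  sum b_i * cnj b_i is an invertible element of the kernel.  Since a - ch(a) lies in the kernel,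
  ch is evaluation at x.  A continuous bijection from the compact set K onto the Hausdorff
  spectrum is a homeomorphism.
*)
theory Submission
  imports Defs "HOL-Algebra.Ring"
begin

section \<open>Finite-order smoothness in Euclidean space\<close>

definition partial_deriv :: "'n::euclidean_space \<Rightarrow> ('n \<Rightarrow> 'b::real_normed_vector) \<Rightarrow> 'n \<Rightarrow> 'b" where
  "partial_deriv v g = (\<lambda>y. frechet_derivative g (at y) v)"

lemma iter_pd_snoc: "iter_pd (vs @ [v]) g = iter_pd vs (partial_deriv v g)"
  by (induction vs) (auto simp: partial_deriv_def)

lemma partial_deriv_at: "(g has_derivative D) (at y) \<Longrightarrow> partial_deriv v g y = D v"
  unfolding partial_deriv_def by (simp add: frechet_derivative_at[symmetric])

definition differentiable_upto ::
    "nat \<Rightarrow> 'n::euclidean_space set \<Rightarrow> ('n \<Rightarrow> 'b::real_normed_vector) \<Rightarrow> bool" where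
  "differentiable_upto k S g \<longleftrightarrow>
     (\<forall>vs. set vs \<subseteq> Basis \<and> length vs \<le> k \<longrightarrow> iter_pd vs g differentiable_on S)"

lemma smooth_on_iff_differentiable_upto: "smooth_on S g \<longleftrightarrow> (\<forall>k. differentiable_upto k S g)"
  unfolding smooth_on_def differentiable_upto_def by auto

lemma differentiable_upto_0: "differentiable_upto 0 S g \<longleftrightarrow> g differentiable_on S"
  unfolding differentiable_upto_def by auto

lemma differentiable_upto_Suc:
  "differentiable_upto (Suc k) S g \<longleftrightarrow>
    g differentiable_on S \<and> (\<forall>v\<in>Basis. differentiable_upto k S (partial_deriv v g))"
proof
  assume g: "differentiable_upto (Suc k) S g"
  have "g differentiable_on S"
    using g[unfolded differentiable_upto_def, rule_format, of "[]"] by simp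
  moreover have "differentiable_upto k S (partial_deriv v g)" if "v \<in> Basis" for v
    unfolding differentiable_upto_def
    using g[unfolded differentiable_upto_def, rule_format, of "_ @ [v]"] that
    by (simp add: iter_pd_snoc)
  ultimately show "g differentiable_on S \<and> (\<forall>v\<in>Basis. differentiable_upto k S (partial_deriv v g))"
    by blast
next
  assume g: "g differentiable_on S \<and> (\<forall>v\<in>Basis. differentiable_upto k S (partial_deriv v g))"
  show "differentiable_upto (Suc k) S g"
    unfolding differentiable_upto_def
  proof (intro allI impI)
    fix vs :: "'a list"
    assume "set vs \<subseteq> Basis \<and> length vs \<le> Suc k"
    then show "iter_pd vs g differentiable_on S"
      using g by (cases vs rule: rev_cases) (auto simp: differentiable_upto_def iter_pd_snoc)
  qed
qed

lemma differentiable_upto_mono: "k \<le> k' \<Longrightarrow> differentiable_upto k' S g \<Longrightarrow> differentiable_upto k S g"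
  unfolding differentiable_upto_def by auto

lemma frechet_derivative_cong_open:
  assumes "open S" "y \<in> S" "\<And>x. x \<in> S \<Longrightarrow> f x = g x"
  shows "frechet_derivative f (at y) = frechet_derivative g (at y)"
proof -
  have "(f has_derivative D) (at y) \<longleftrightarrow> (g has_derivative D) (at y)" for D
    using has_derivative_transform_within_open[of f D y UNIV S g]
      has_derivative_transform_within_open[of g D y UNIV S f] assms by auto
  then show ?thesis unfolding frechet_derivative_def by simp
qed

lemma iter_pd_cong_open:
  assumes "open S" "\<And>x. x \<in> S \<Longrightarrow> f x = g x" "x \<in> S"
  shows "iter_pd vs f x = iter_pd vs g x"
  using assms(3)
proof (induction vs arbitrary: x)
  case (Cons v vs)
  then show ?case using frechet_derivative_cong_open[OF assms(1) Cons.prems Cons.IH] by simp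
qed (use assms(2) in simp)

lemma differentiable_on_cong_open:
  assumes "open S" "\<And>x. x \<in> S \<Longrightarrow> f x = g x" "f differentiable_on S"
  shows "g differentiable_on S"
  unfolding differentiable_on_eq_differentiable_at[OF assms(1)] differentiable_def
proof
  fix x assume x: "x \<in> S"
  then obtain D where "(f has_derivative D) (at x)"
    using assms(3) unfolding differentiable_on_eq_differentiable_at[OF assms(1)] differentiable_def
    by blast
  then have "(g has_derivative D) (at x)"
    using has_derivative_transform_within_open[of f D x UNIV S g] x assms(1,2) by simp
  then show "\<exists>D. (g has_derivative D) (at x)" by blast
qed

lemma differentiable_upto_cong_open:
  assumes "open S" "\<And>x. x \<in> S \<Longrightarrow> f x = g x" "differentiable_upto k S f"
  shows "differentiable_upto k S g"
  unfolding differentiable_upto_def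
proof (intro allI impI)
  fix vs :: "'a list"
  assume "set vs \<subseteq> Basis \<and> length vs \<le> k"
  then have "iter_pd vs f differentiable_on S"
    using assms(3) unfolding differentiable_upto_def by blast
  moreover have "iter_pd vs f x = iter_pd vs g x" if "x \<in> S" for x
    using iter_pd_cong_open[OF assms(1) _ that] assms(2) by blast
  ultimately show "iter_pd vs g differentiable_on S"
    using differentiable_on_cong_open[OF assms(1)] by blast
qed

lemma differentiable_on_open_has_derivative:
  "open S \<Longrightarrow> g differentiable_on S \<Longrightarrow> y \<in> S \<Longrightarrow> (g has_derivative frechet_derivative g (at y)) (at y)"
  using differentiable_on_eq_differentiable_at frechet_derivative_works by blast

lemma differentiable_on_openI:
  "open S \<Longrightarrow> (\<And>y. y \<in> S \<Longrightarrow> (f has_derivative D y) (at y)) \<Longrightarrow> f differentiable_on S"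
  unfolding differentiable_on_eq_differentiable_at differentiable_def by blast

lemma differentiable_upto_SucI:
  assumes "open S" and D: "\<And>y. y \<in> S \<Longrightarrow> (g has_derivative D y) (at y)"
    and "\<And>v. v \<in> Basis \<Longrightarrow> differentiable_upto k S (\<lambda>y. D y v)"
  shows "differentiable_upto (Suc k) S g"
  unfolding differentiable_upto_Suc
proof (intro conjI ballI)
  show "g differentiable_on S" by (rule differentiable_on_openI[OF assms(1) D])
  fix v :: 'a assume "v \<in> Basis"
  show "differentiable_upto k S (partial_deriv v g)"
    by (rule differentiable_upto_cong_open[OF assms(1) _ assms(3)[OF \<open>v \<in> Basis\<close>]])
      (simp add: partial_deriv_at[OF D])
qed

lemma differentiable_upto_has_derivative:
  "open S \<Longrightarrow> differentiable_upto k S g \<Longrightarrow> y \<in> S \<Longrightarrow>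
    (g has_derivative frechet_derivative g (at y)) (at y)"
  using differentiable_upto_mono[of 0 k] differentiable_upto_0 differentiable_on_open_has_derivative
  by blast

lemma differentiable_upto_linear:
  assumes "open S" "bounded_linear L"
  shows "differentiable_upto k S g \<Longrightarrow> differentiable_upto k S (\<lambda>x. L (g x))"
proof (induction k arbitrary: g)
  case 0
  show ?case
    unfolding differentiable_upto_0
    by (rule differentiable_on_openI[OF assms(1)],
        rule bounded_linear.has_derivative[OF assms(2)
          differentiable_upto_has_derivative[OF assms(1) 0]])
next
  case (Suc k)
  show ?case
  proof (rule differentiable_upto_SucI[OF assms(1)])
    show "((\<lambda>x. L (g x)) has_derivative (\<lambda>h. L (frechet_derivative g (at y) h))) (at y)"
      if "y \<in> S" for y
      by (rule bounded_linear.has_derivative[OF assms(2)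
          differentiable_upto_has_derivative[OF assms(1) Suc.prems that]])
    show "differentiable_upto k S (\<lambda>y. L (frechet_derivative g (at y) v))" if "v \<in> Basis" for v
      using Suc.IH Suc.prems that by (simp add: differentiable_upto_Suc partial_deriv_def)
  qed
qed

lemma differentiable_upto_add:
  assumes "open S"
  shows "differentiable_upto k S f \<Longrightarrow> differentiable_upto k S g \<Longrightarrow>
    differentiable_upto k S (\<lambda>x. f x + g x)"
proof (induction k arbitrary: f g)
  case 0
  show ?case
    unfolding differentiable_upto_0
    by (rule differentiable_on_openI[OF assms(1)],
        rule has_derivative_add[OF differentiable_upto_has_derivative[OF assms(1) 0(1)]
          differentiable_upto_has_derivative[OF assms(1) 0(2)]])
next
  case (Suc k)
  show ?case
  proof (rule differentiable_upto_SucI[OF assms(1)])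
    show "((\<lambda>x. f x + g x) has_derivative
        (\<lambda>h. frechet_derivative f (at y) h + frechet_derivative g (at y) h)) (at y)"
      if "y \<in> S" for y
      by (intro has_derivative_add differentiable_upto_has_derivative[OF assms(1) Suc.prems(1) that]
          differentiable_upto_has_derivative[OF assms(1) Suc.prems(2) that])
    show "differentiable_upto k S
        (\<lambda>y. frechet_derivative f (at y) v + frechet_derivative g (at y) v)" if "v \<in> Basis" for v
      using Suc.IH Suc.prems that by (simp add: differentiable_upto_Suc partial_deriv_def)
  qed
qed

lemma differentiable_upto_const: "open S \<Longrightarrow> differentiable_upto k S (\<lambda>x. c)"
proof (induction k)
  case 0
  then show ?case by (simp add: differentiable_upto_0)
next
  case (Suc k)
  have "differentiable_upto k S (\<lambda>x. 0 :: 'b)"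
    using differentiable_upto_linear[OF Suc.prems bounded_linear_zero Suc.IH[OF Suc.prems]] by simp
  then show ?case
    by (intro differentiable_upto_SucI[OF Suc.prems has_derivative_const]) simp
qed

lemma differentiable_upto_mult:
  fixes f g :: "'n::euclidean_space \<Rightarrow> 'c::real_normed_algebra"
  assumes "open S"
  shows "differentiable_upto k S f \<Longrightarrow> differentiable_upto k S g \<Longrightarrow>
    differentiable_upto k S (\<lambda>x. f x * g x)"
proof (induction k arbitrary: f g)
  case 0
  show ?case
    unfolding differentiable_upto_0
    by (rule differentiable_on_openI[OF assms(1)],
        rule has_derivative_mult[OF differentiable_upto_has_derivative[OF assms(1) 0(1)]
          differentiable_upto_has_derivative[OF assms(1) 0(2)]])
next
  case (Suc k)
  show ?case
  proof (rule differentiable_upto_SucI[OF assms(1)])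
    show "((\<lambda>x. f x * g x) has_derivative
        (\<lambda>h. f y * frechet_derivative g (at y) h + frechet_derivative f (at y) h * g y)) (at y)"
      if "y \<in> S" for y
      by (intro has_derivative_mult
          differentiable_upto_has_derivative[OF assms(1) Suc.prems(1) that]
          differentiable_upto_has_derivative[OF assms(1) Suc.prems(2) that])
    fix v :: 'n assume "v \<in> Basis"
    then have "differentiable_upto k S f" "differentiable_upto k S g"
      "differentiable_upto k S (partial_deriv v f)" "differentiable_upto k S (partial_deriv v g)"
      using Suc.prems differentiable_upto_mono[of k "Suc k"] by (auto simp: differentiable_upto_Suc)
    then show "differentiable_upto k S
        (\<lambda>y. f y * frechet_derivative g (at y) v + frechet_derivative f (at y) v * g y)"
      using differentiable_upto_add[OF assms(1) Suc.IH Suc.IH] by (simp add: partial_deriv_def)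
  qed
qed

lemma differentiable_upto_inverse:
  fixes f :: "'n::euclidean_space \<Rightarrow> 'c::real_normed_field"
  assumes "open S" "\<And>x. x \<in> S \<Longrightarrow> f x \<noteq> 0"
  shows "differentiable_upto k S f \<Longrightarrow> differentiable_upto k S (\<lambda>x. inverse (f x))"
proof (induction k)
  case 0
  show ?case
    unfolding differentiable_upto_0
    by (rule differentiable_on_openI[OF assms(1)],
        rule Deriv.has_derivative_inverse[OF assms(2)
          differentiable_upto_has_derivative[OF assms(1) 0]])
next
  case (Suc k)
  show ?case
  proof (rule differentiable_upto_SucI[OF assms(1)])
    show "((\<lambda>x. inverse (f x)) has_derivative
        (\<lambda>h. - (inverse (f y) * frechet_derivative f (at y) h * inverse (f y)))) (at y)"
      if "y \<in> S" for y
      by (intro Deriv.has_derivative_inverse assms(2) that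
          differentiable_upto_has_derivative[OF assms(1) Suc.prems that])
    fix v :: 'n assume "v \<in> Basis"
    then have "differentiable_upto k S (\<lambda>x. inverse (f x))"
      "differentiable_upto k S (partial_deriv v f)"
      using Suc.IH Suc.prems differentiable_upto_mono[of k "Suc k"]
      by (auto simp: differentiable_upto_Suc)
    from differentiable_upto_mult[OF assms(1) differentiable_upto_mult[OF assms(1) this] this(1)]
    show "differentiable_upto k S
        (\<lambda>y. - (inverse (f y) * frechet_derivative f (at y) v * inverse (f y)))"
      using differentiable_upto_linear[OF assms(1) bounded_linear_minus[OF bounded_linear_ident]]
      by (simp add: partial_deriv_def)
  qed
qed

lemma smooth_on_linear: "open S \<Longrightarrow> bounded_linear L \<Longrightarrow> smooth_on S g \<Longrightarrow> smooth_on S (\<lambda>x. L (g x))"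
  by (simp add: smooth_on_iff_differentiable_upto differentiable_upto_linear)

lemma smooth_on_add: "open S \<Longrightarrow> smooth_on S f \<Longrightarrow> smooth_on S g \<Longrightarrow> smooth_on S (\<lambda>x. f x + g x)"
  by (simp add: smooth_on_iff_differentiable_upto differentiable_upto_add)

lemma smooth_on_mult:
  "open S \<Longrightarrow> smooth_on S f \<Longrightarrow> smooth_on S g \<Longrightarrow> smooth_on S (\<lambda>x. f x * g x :: 'c::real_normed_algebra)"
  by (simp add: smooth_on_iff_differentiable_upto differentiable_upto_mult)

lemma smooth_on_const: "open S \<Longrightarrow> smooth_on S (\<lambda>x. c)"
  by (simp add: smooth_on_iff_differentiable_upto differentiable_upto_const)

lemma smooth_on_inverse:
  "open S \<Longrightarrow> (\<And>x. x \<in> S \<Longrightarrow> f x \<noteq> 0) \<Longrightarrow> smooth_on S f \<Longrightarrow>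
    smooth_on S (\<lambda>x. inverse (f x) :: 'c::real_normed_field)"
  by (simp add: smooth_on_iff_differentiable_upto differentiable_upto_inverse)

lemma smooth_on_subset: "smooth_on S f \<Longrightarrow> T \<subseteq> S \<Longrightarrow> smooth_on T f"
  unfolding smooth_on_def using differentiable_on_subset by blast

lemma smooth_on_imp_continuous_on:
  assumes "smooth_on S f"
  shows "continuous_on S f"
  using assms[unfolded smooth_on_def, rule_format, of "[]"]
  by (simp add: differentiable_imp_continuous_on)

section \<open>Charts and smooth functions on a manifold\<close>

lemma smooth_manifold_chart: "smooth_manifold X Atl \<Longrightarrow> (W, \<psi>) \<in> Atl \<Longrightarrow> is_chart X W \<psi>"
  unfolding smooth_manifold_def smooth_atlas_def by fast

lemma is_chart_openin: "is_chart X W \<psi> \<Longrightarrow> openin X W"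
  unfolding is_chart_def by blast

lemma is_chart_homeomorphic_map:
  "is_chart X W \<psi> \<Longrightarrow> homeomorphic_map (subtopology X W) (top_of_set (\<psi> ` W)) \<psi>"
  unfolding is_chart_def by blast

lemma is_chart_inj_on:
  assumes "is_chart X W \<psi>"
  shows "inj_on \<psi> W"
proof -
  have "topspace (subtopology X W) = W"
    using openin_subset[OF is_chart_openin[OF assms]] by (rule topspace_subtopology_subset)
  with homeomorphic_imp_injective_map[OF is_chart_homeomorphic_map[OF assms]] show ?thesis
    by simp
qed

lemma is_chart_inv_into: "is_chart X W \<psi> \<Longrightarrow> x \<in> W \<Longrightarrow> inv_into W \<psi> (\<psi> x) = x"
  by (simp add: is_chart_inj_on)

lemma is_chart_continuous_map: "continuous_map (subtopology X W) euclidean \<psi>" if "is_chart X W \<psi>"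
  using homeomorphic_imp_continuous_map[OF is_chart_homeomorphic_map[OF that]]
    continuous_map_in_subtopology by blast

lemma is_chart_open_image:
  assumes c: "is_chart X W \<psi>" and V: "openin X V"
  shows "open (\<psi> ` (V \<inter> W))"
proof -
  have "openin (subtopology X W) (V \<inter> W)"
    using V by (rule openin_subtopology_Int)
  then have "openin (top_of_set (\<psi> ` W)) (\<psi> ` (V \<inter> W))"
    using homeomorphic_map_openness_eq[OF is_chart_homeomorphic_map[OF c]] by blast
  moreover have "open (\<psi> ` W)" using c unfolding is_chart_def by blast
  ultimately show ?thesis using openin_open_trans by blast
qed

lemma smooth_fun_openin: "smooth_fun X Atl V f \<Longrightarrow> openin X V"
  unfolding smooth_fun_def by blast

lemma smooth_fun_subset:
  assumes "smooth_fun X Atl V f" "openin X V'" "V' \<subseteq> V"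
  shows "smooth_fun X Atl V' f"
  unfolding smooth_fun_def
proof (intro conjI ballI)
  fix p assume p: "p \<in> Atl"
  obtain W \<psi> where pw: "p = (W, \<psi>)" by force
  have "smooth_on (\<psi> ` (V \<inter> W)) (f \<circ> inv_into W \<psi>)"
    using assms(1) p pw unfolding smooth_fun_def by auto
  moreover have "\<psi> ` (V' \<inter> W) \<subseteq> \<psi> ` (V \<inter> W)" using assms(3) by auto
  ultimately show "case p of (W, \<psi>) \<Rightarrow> smooth_on (\<psi> ` (V' \<inter> W)) (f \<circ> inv_into W \<psi>)"
    using pw smooth_on_subset by auto
qed (rule assms(2))

lemma smooth_fun_binop:
  fixes Atl :: "('a set \<times> ('a \<Rightarrow> 'n::euclidean_space)) set"
  assumes man: "smooth_manifold X Atl"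
    and f: "smooth_fun X Atl V f" and g: "smooth_fun X Atl V g"
    and op: "\<And>(S::'n set) a b. open S \<Longrightarrow> smooth_on S a \<Longrightarrow> smooth_on S b \<Longrightarrow>
               smooth_on S (\<lambda>x. F (a x) (b x))"
  shows "smooth_fun X Atl V (\<lambda>x. F (f x) (g x))"
  unfolding smooth_fun_def
proof (intro conjI ballI)
  show "openin X V" by (rule smooth_fun_openin[OF f])
  fix p assume p: "p \<in> Atl"
  obtain W \<psi> where pw: "p = (W, \<psi>)" by force
  have "open (\<psi> ` (V \<inter> W))"
    using is_chart_open_image smooth_manifold_chart[OF man] p pw smooth_fun_openin[OF f] by metis
  moreover have "smooth_on (\<psi> ` (V \<inter> W)) (f \<circ> inv_into W \<psi>)"
    "smooth_on (\<psi> ` (V \<inter> W)) (g \<circ> inv_into W \<psi>)"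
    using f g p pw unfolding smooth_fun_def by auto
  ultimately show "case p of (W, \<psi>) \<Rightarrow> smooth_on (\<psi> ` (V \<inter> W)) ((\<lambda>x. F (f x) (g x)) \<circ> inv_into W \<psi>)"
    using op pw by (simp add: o_def)
qed

lemma smooth_fun_add:
  "smooth_manifold X Atl \<Longrightarrow> smooth_fun X Atl V f \<Longrightarrow> smooth_fun X Atl V g \<Longrightarrow>
    smooth_fun X Atl V (\<lambda>x. f x + g x)"
  using smooth_fun_binop[of X Atl V f g "(+)"] smooth_on_add by blast

lemma smooth_fun_mult:
  "smooth_manifold X Atl \<Longrightarrow> smooth_fun X Atl V f \<Longrightarrow> smooth_fun X Atl V g \<Longrightarrow>
    smooth_fun X Atl V (\<lambda>x. f x * g x)"
  using smooth_fun_binop[of X Atl V f g "(*)"] smooth_on_mult by blast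

lemma smooth_fun_cnj:
  "smooth_manifold X Atl \<Longrightarrow> smooth_fun X Atl V f \<Longrightarrow> smooth_fun X Atl V (\<lambda>x. cnj (f x))"
  using smooth_fun_binop[of X Atl V f f "\<lambda>u v. cnj u"] smooth_on_linear bounded_linear_cnj by blast

lemma smooth_fun_const:
  assumes man: "smooth_manifold X Atl" and V: "openin X V"
  shows "smooth_fun X Atl V (\<lambda>x. c)"
  unfolding smooth_fun_def
proof (intro conjI ballI)
  fix p assume p: "p \<in> Atl"
  obtain W \<psi> where pw: "p = (W, \<psi>)" by force
  have "open (\<psi> ` (V \<inter> W))"
    using is_chart_open_image smooth_manifold_chart[OF man] p pw V by metis
  then show "case p of (W, \<psi>) \<Rightarrow> smooth_on (\<psi> ` (V \<inter> W)) ((\<lambda>x. c) \<circ> inv_into W \<psi>)"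
    using pw smooth_on_const by (simp add: o_def)
qed (rule V)

lemma smooth_fun_inverse:
  assumes man: "smooth_manifold X Atl" and f: "smooth_fun X Atl V f"
    and nz: "\<And>x. x \<in> V \<Longrightarrow> f x \<noteq> 0"
  shows "smooth_fun X Atl V (\<lambda>x. inverse (f x))"
  unfolding smooth_fun_def
proof (intro conjI ballI)
  show "openin X V" by (rule smooth_fun_openin[OF f])
  fix p assume p: "p \<in> Atl"
  obtain W \<psi> where pw: "p = (W, \<psi>)" by force
  have c: "is_chart X W \<psi>" using smooth_manifold_chart[OF man] p pw by blast
  have "open (\<psi> ` (V \<inter> W))" using is_chart_open_image[OF c smooth_fun_openin[OF f]] .
  moreover have "(f \<circ> inv_into W \<psi>) y \<noteq> 0" if "y \<in> \<psi> ` (V \<inter> W)" for y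
    using that is_chart_inv_into[OF c] nz by auto
  moreover have "smooth_on (\<psi> ` (V \<inter> W)) (f \<circ> inv_into W \<psi>)"
    using f p pw unfolding smooth_fun_def by auto
  ultimately show "case p of (W, \<psi>) \<Rightarrow> smooth_on (\<psi> ` (V \<inter> W)) ((\<lambda>x. inverse (f x)) \<circ> inv_into W \<psi>)"
    using pw smooth_on_inverse[of "\<psi> ` (V \<inter> W)" "f \<circ> inv_into W \<psi>"] by (simp add: o_def)
qed

text \<open>This is where the compatibility of the charts of the atlas enters.\<close>
lemma smooth_fun_chart_coordinate:
  assumes man: "smooth_manifold X Atl" and chart: "(U, \<phi>) \<in> Atl"
  shows "smooth_fun X Atl U (\<lambda>z. complex_of_real (\<phi> z \<bullet> b))"
  unfolding smooth_fun_def
proof (intro conjI ballI)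
  show "openin X U" by (rule is_chart_openin[OF smooth_manifold_chart[OF man chart]])
  fix q assume q: "q \<in> Atl"
  obtain W \<psi> where qw: "q = (W, \<psi>)" by force
  have "smooth_on (\<psi> ` (W \<inter> U)) (\<phi> \<circ> inv_into W \<psi>)"
    using man chart q qw unfolding smooth_manifold_def smooth_atlas_def by fast
  then have "smooth_on (\<psi> ` (U \<inter> W)) (\<phi> \<circ> inv_into W \<psi>)"
    by (simp add: Int_commute)
  moreover have "open (\<psi> ` (U \<inter> W))"
    using is_chart_open_image smooth_manifold_chart[OF man] q qw \<open>openin X U\<close> by metis
  moreover have "bounded_linear (\<lambda>v. complex_of_real (v \<bullet> b))"
    by (intro bounded_linear_compose[OF bounded_linear_of_real bounded_linear_inner_left])
  ultimately show "case q of (W, \<psi>) \<Rightarrow>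
      smooth_on (\<psi> ` (U \<inter> W)) ((\<lambda>z. complex_of_real (\<phi> z \<bullet> b)) \<circ> inv_into W \<psi>)"
    using qw smooth_on_linear[of "\<psi> ` (U \<inter> W)" "\<lambda>v. complex_of_real (v \<bullet> b)"] by (simp add: o_def)
qed

lemma smooth_fun_continuous_map:
  assumes man: "smooth_manifold X Atl" and chart: "(U, \<phi>) \<in> Atl"
    and f: "smooth_fun X Atl V f" and VU: "V \<subseteq> U"
  shows "continuous_map (subtopology X V) euclidean f"
proof -
  have c: "is_chart X U \<phi>" by (rule smooth_manifold_chart[OF man chart])
  have VX: "V \<subseteq> topspace X" using openin_subset[OF smooth_fun_openin[OF f]] .
  have "continuous_on (\<phi> ` (V \<inter> U)) (f \<circ> inv_into U \<phi>)"
    using f chart smooth_on_imp_continuous_on unfolding smooth_fun_def by fast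
  then have g: "continuous_map (top_of_set (\<phi> ` V)) euclidean (f \<circ> inv_into U \<phi>)"
    using VU by (simp add: Int_absorb2)
  have "continuous_map (subtopology X V) euclidean \<phi>"
    using continuous_map_from_subtopology[OF is_chart_continuous_map[OF c], of V] VU
    by (simp add: subtopology_subtopology Int_absorb1)
  then have "continuous_map (subtopology X V) (top_of_set (\<phi> ` V)) \<phi>"
    by (rule continuous_map_into_subtopology) auto
  from continuous_map_compose[OF this g] show ?thesis
    by (rule continuous_map_eq) (use VX VU is_chart_inv_into[OF c] in auto)
qed

section \<open>The seminorms \<open>N\<^sub>m\<^sub>,\<^sub>C\<close>\<close>

definition Nsn_values ::
    "'a set \<Rightarrow> ('a \<Rightarrow> 'n::euclidean_space) \<Rightarrow> nat \<Rightarrow> 'a set \<Rightarrow> ('a \<Rightarrow> complex) \<Rightarrow> real set"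
  where
 "Nsn_values U \<phi> m C f = {cmod (iter_pd vs (f \<circ> inv_into U \<phi>) (\<phi> x)) | vs x.
     set vs \<subseteq> Basis \<and> length vs \<le> m \<and> x \<in> C}"

lemma Nsn_eq_Sup: "Nsn U \<phi> m C f = Sup (insert 0 (Nsn_values U \<phi> m C f))"
  unfolding Nsn_def Nsn_values_def ..

lemma Nsn_values_mono: "m \<le> m' \<Longrightarrow> C \<subseteq> C' \<Longrightarrow> Nsn_values U \<phi> m C f \<subseteq> Nsn_values U \<phi> m' C' f"
  unfolding Nsn_values_def by fastforce

lemma bdd_above_Nsn_values:
  fixes \<phi> :: "'a \<Rightarrow> 'n::euclidean_space"
  assumes man: "smooth_manifold X Atl" and chart: "(U, \<phi>) \<in> Atl"
    and f: "smooth_fun X Atl V f" and VU: "V \<subseteq> U" and C: "compactin X C" "C \<subseteq> V"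
  shows "bdd_above (Nsn_values U \<phi> m C f)"
proof -
  let ?g = "f \<circ> inv_into U \<phi>" and ?L = "{vs. set vs \<subseteq> (Basis::'n set) \<and> length vs \<le> m}"
  have "compactin (subtopology X U) C" using C VU by (simp add: compactin_subtopology)
  from image_compactin[OF this is_chart_continuous_map[OF smooth_manifold_chart[OF man chart]]]
  have cpt: "compact (\<phi> ` C)" by simp
  have sm: "smooth_on (\<phi> ` V) ?g"
    using f chart VU unfolding smooth_fun_def by (auto simp: Int_absorb2)
  have bd: "bounded (iter_pd vs ?g ` \<phi> ` C)" if "vs \<in> ?L" for vs
  proof -
    have "continuous_on (\<phi> ` V) (iter_pd vs ?g)"
      using sm that by (simp add: smooth_on_def differentiable_imp_continuous_on)
    then have "continuous_on (\<phi> ` C) (iter_pd vs ?g)"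
      by (rule continuous_on_subset) (use C in auto)
    then show ?thesis by (intro compact_imp_bounded compact_continuous_image cpt)
  qed
  have "finite ?L" by (rule finite_lists_length_le) simp
  then have "bounded (\<Union>vs\<in>?L. iter_pd vs ?g ` \<phi> ` C)"
    by (rule bounded_UN) (use bd in blast)
  then obtain B where B: "\<And>z. z \<in> (\<Union>vs\<in>?L. iter_pd vs ?g ` \<phi> ` C) \<Longrightarrow> norm z \<le> B"
    unfolding bounded_iff by blast
  show ?thesis
  proof (rule bdd_aboveI)
    fix r assume "r \<in> Nsn_values U \<phi> m C f"
    then obtain vs x where "r = cmod (iter_pd vs ?g (\<phi> x))" "vs \<in> ?L" "x \<in> C"
      unfolding Nsn_values_def by blast
    then show "r \<le> B" using B by blast
  qed
qed

lemma Nsn_mono: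
  assumes "smooth_manifold X Atl" "(U, \<phi>) \<in> Atl" "smooth_fun X Atl V f" "V \<subseteq> U"
    "compactin X C'" "C' \<subseteq> V" and "m \<le> m'" "C \<subseteq> C'"
  shows "Nsn U \<phi> m C f \<le> Nsn U \<phi> m' C' f"
  unfolding Nsn_eq_Sup
  using bdd_above_Nsn_values[OF assms(1-6)] Nsn_values_mono[OF assms(7,8), of U \<phi> f]
  by (intro cSup_subset_mono insert_mono) auto

lemma Nsn_nonneg:
  assumes "smooth_manifold X Atl" "(U, \<phi>) \<in> Atl" "smooth_fun X Atl V f" "V \<subseteq> U"
    "compactin X C" "C \<subseteq> V"
  shows "0 \<le> Nsn U \<phi> m C f"
  unfolding Nsn_eq_Sup using bdd_above_Nsn_values[OF assms] by (intro cSup_upper) auto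

lemma norm_le_Nsn:
  assumes "smooth_manifold X Atl" "(U, \<phi>) \<in> Atl" "smooth_fun X Atl V f" "V \<subseteq> U"
    "compactin X C" "C \<subseteq> V" and x: "x \<in> C"
  shows "cmod (f x) \<le> Nsn U \<phi> m C f"
  unfolding Nsn_eq_Sup
proof (rule cSup_upper)
  have "cmod (f x) = cmod (iter_pd [] (f \<circ> inv_into U \<phi>) (\<phi> x))"
    using is_chart_inv_into[OF smooth_manifold_chart[OF assms(1,2)]] x assms(4,6) by auto
  then show "cmod (f x) \<in> insert 0 (Nsn_values U \<phi> m C f)"
    unfolding Nsn_values_def using x by (auto intro!: exI[of _ "[]"] exI[of _ x])
qed (use bdd_above_Nsn_values[OF assms(1-6)] in auto)

section \<open>Commutative unital algebras\<close>

lemma calgebra_closed: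
  assumes "comm_unital_calgebra R"
  shows ca_one_closed: "ca_one R \<in> ca_carrier R"
    and ca_add_closed: "\<And>a b. a \<in> ca_carrier R \<Longrightarrow> b \<in> ca_carrier R \<Longrightarrow> ca_add R a b \<in> ca_carrier R"
    and ca_mul_closed: "\<And>a b. a \<in> ca_carrier R \<Longrightarrow> b \<in> ca_carrier R \<Longrightarrow> ca_mul R a b \<in> ca_carrier R"
    and ca_scale_closed: "\<And>c a. a \<in> ca_carrier R \<Longrightarrow> ca_scale R c a \<in> ca_carrier R"
    and ca_zero_closed: "ca_zero R \<in> ca_carrier R"
    and ca_sub_closed: "\<And>a b. a \<in> ca_carrier R \<Longrightarrow> b \<in> ca_carrier R \<Longrightarrow> ca_sub R a b \<in> ca_carrier R"
  using assms unfolding comm_unital_calgebra_def Let_def ca_zero_def ca_sub_def by blast+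

text \<open>Viewed as a ring, the algebra becomes accessible to the \<open>algebra\<close> proof method of
  HOL-Algebra, which does the ring identities needed for the seminorm estimates.\<close>
definition calg_ring :: "'g calg \<Rightarrow> 'g ring" where
  "calg_ring R = \<lparr>carrier = ca_carrier R, monoid.mult = ca_mul R, one = ca_one R,
     zero = ca_zero R, add = ca_add R\<rparr>"

lemma calg_ring_ops:
  "ca_carrier R = carrier (calg_ring R)" "ca_add R = add (calg_ring R)"
  "ca_mul R = monoid.mult (calg_ring R)" "ca_one R = one (calg_ring R)"
  "ca_zero R = zero (calg_ring R)"
  by (simp_all add: calg_ring_def)

lemma cring_calg_ring:
  assumes "comm_unital_calgebra R"
  shows "cring (calg_ring R)"
proof -
  note ax = assms[unfolded comm_unital_calgebra_def Let_def]
  have "ca_zero R \<in> ca_carrier R" by (rule ca_zero_closed[OF assms])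
  show ?thesis
  proof (rule cringI)
    show "abelian_group (calg_ring R)"
      by (rule abelian_groupI) (use ax \<open>ca_zero R \<in> _\<close> in \<open>auto simp: calg_ring_def\<close>)
    show "comm_monoid (calg_ring R)"
      by (rule comm_monoidI) (use ax in \<open>auto simp: calg_ring_def\<close>)
  qed (use ax in \<open>auto simp: calg_ring_def\<close>)
qed

lemma ca_mul_commute:
  assumes R: "comm_unital_calgebra R" and "a \<in> ca_carrier R" "b \<in> ca_carrier R"
  shows "ca_mul R a b = ca_mul R b a"
proof -
  interpret cring "calg_ring R" by (rule cring_calg_ring[OF R])
  show ?thesis using assms(2,3) m_comm by (simp add: calg_ring_ops)
qed

lemma ca_one_mul:
  assumes R: "comm_unital_calgebra R" and "a \<in> ca_carrier R"
  shows "ca_mul R (ca_one R) a = a"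
proof -
  interpret cring "calg_ring R" by (rule cring_calg_ring[OF R])
  show ?thesis using assms(2) by (simp add: calg_ring_ops)
qed

lemma ca_sub_calg_ring:
  assumes R: "comm_unital_calgebra R" and "a \<in> ca_carrier R" "b \<in> ca_carrier R"
  shows "ca_sub R a b = a \<ominus>\<^bsub>calg_ring R\<^esub> b"
proof -
  interpret cring "calg_ring R" by (rule cring_calg_ring[OF R])
  have "ca_scale R (-1) b \<oplus>\<^bsub>calg_ring R\<^esub> b = \<zero>\<^bsub>calg_ring R\<^esub>"
    using R assms(3) unfolding comm_unital_calgebra_def Let_def calg_ring_def by auto
  then have "\<ominus>\<^bsub>calg_ring R\<^esub> b = ca_scale R (-1) b"
    using assms(3) ca_scale_closed[OF R] by (intro minus_equality) (auto simp: calg_ring_def)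
  then show ?thesis by (simp add: ca_sub_def minus_eq calg_ring_ops(2))
qed

lemma ca_scale_calg_ring:
  assumes R: "comm_unital_calgebra R" and "a \<in> ca_carrier R"
  shows "ca_scale R c a = ca_scale R c (ca_one R) \<otimes>\<^bsub>calg_ring R\<^esub> a"
  using assms unfolding comm_unital_calgebra_def Let_def calg_ring_def
  by (metis monoid.select_convs(1))

lemma ca_scale_one_diff:
  assumes R: "comm_unital_calgebra R"
  shows "ca_scale R (c - d) (ca_one R) =
    ca_scale R c (ca_one R) \<ominus>\<^bsub>calg_ring R\<^esub> ca_scale R d (ca_one R)"
proof -
  interpret cring "calg_ring R" by (rule cring_calg_ring[OF R])
  have one: "ca_one R \<in> carrier (calg_ring R)" by (simp add: ca_one_closed[OF R] calg_ring_def)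
  have "ca_scale R c (ca_one R) =
      ca_scale R (c - d) (ca_one R) \<oplus>\<^bsub>calg_ring R\<^esub> ca_scale R d (ca_one R)"
    using R one unfolding comm_unital_calgebra_def Let_def calg_ring_def
    by (metis diff_add_cancel partial_object.select_convs(1) ring.select_convs(2))
  moreover have "ca_scale R e (ca_one R) \<in> carrier (calg_ring R)" for e
    using ca_scale_closed[OF R ca_one_closed[OF R]] by (simp add: calg_ring_def)
  ultimately show ?thesis by (simp add: a_assoc minus_eq r_neg)
qed

lemma ca_sub_self:
  assumes "comm_unital_calgebra R" "a \<in> ca_carrier R"
  shows "ca_sub R a a = ca_zero R"
  using assms unfolding comm_unital_calgebra_def Let_def ca_sub_def by blast

lemma ca_sub_add_sub:
  assumes R: "comm_unital_calgebra R" and "u \<in> ca_carrier R" "v \<in> ca_carrier R" "w \<in> ca_carrier R"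
  shows "ca_add R (ca_sub R u v) (ca_sub R v w) = ca_sub R u w"
proof -
  interpret cring "calg_ring R" by (rule cring_calg_ring[OF R])
  show ?thesis using assms(2-) by (simp add: ca_sub_calg_ring[OF R] calg_ring_ops) algebra
qed

lemma ca_add_sub_add:
  assumes R: "comm_unital_calgebra R"
    and "x \<in> ca_carrier R" "y \<in> ca_carrier R" "a \<in> ca_carrier R" "b \<in> ca_carrier R"
  shows "ca_sub R (ca_add R x y) (ca_add R a b) = ca_add R (ca_sub R x a) (ca_sub R y b)"
proof -
  interpret cring "calg_ring R" by (rule cring_calg_ring[OF R])
  show ?thesis
    using assms(2-) by (simp add: ca_sub_calg_ring[OF R] ca_add_closed[OF R] calg_ring_ops) algebra
qed

lemma ca_mul_sub_mul:
  assumes R: "comm_unital_calgebra R" and "a \<in> ca_carrier R" "x \<in> ca_carrier R" "y \<in> ca_carrier R"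
  shows "ca_sub R (ca_mul R a x) (ca_mul R a y) = ca_mul R a (ca_sub R x y)"
proof -
  interpret cring "calg_ring R" by (rule cring_calg_ring[OF R])
  show ?thesis
    using assms(2-) by (simp add: ca_sub_calg_ring[OF R] ca_mul_closed[OF R] calg_ring_ops) algebra
qed

lemma ca_scale_sub_scale:
  assumes R: "comm_unital_calgebra R" and x: "x \<in> ca_carrier R" and a: "a \<in> ca_carrier R"
  shows "ca_sub R (ca_scale R c x) (ca_scale R d a) =
    ca_add R (ca_scale R c (ca_sub R x a)) (ca_scale R (c - d) a)"
proof -
  interpret cring "calg_ring R" by (rule cring_calg_ring[OF R])
  let ?u = "\<lambda>e. ca_scale R e (ca_one R)"
  have u: "?u e \<in> carrier (calg_ring R)" for e
    using ca_scale_closed[OF R ca_one_closed[OF R]] by (simp add: calg_ring_ops)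
  have "ca_scale R c x = ?u c \<otimes>\<^bsub>calg_ring R\<^esub> x"
    "ca_scale R d a = ?u d \<otimes>\<^bsub>calg_ring R\<^esub> a"
    "ca_scale R c (ca_sub R x a) = ?u c \<otimes>\<^bsub>calg_ring R\<^esub> ca_sub R x a"
    "ca_scale R (c - d) a = ?u (c - d) \<otimes>\<^bsub>calg_ring R\<^esub> a"
    by (intro ca_scale_calg_ring[OF R] x a ca_sub_closed[OF R])+
  then show ?thesis
    unfolding ca_scale_one_diff[OF R]
    using x a u by (simp add: ca_sub_calg_ring[OF R] calg_ring_ops) algebra
qed

section \<open>Topologies defined by submultiplicative seminorms\<close>

lemma submult_seminormD:
  assumes "submult_seminorm R p"
  shows submult_seminorm_nonneg: "\<And>a. a \<in> ca_carrier R \<Longrightarrow> 0 \<le> p a"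
    and submult_seminorm_add:
      "\<And>a b. a \<in> ca_carrier R \<Longrightarrow> b \<in> ca_carrier R \<Longrightarrow> p (ca_add R a b) \<le> p a + p b"
    and submult_seminorm_scale: "\<And>c a. a \<in> ca_carrier R \<Longrightarrow> p (ca_scale R c a) = cmod c * p a"
    and submult_seminorm_mul:
      "\<And>a b. a \<in> ca_carrier R \<Longrightarrow> b \<in> ca_carrier R \<Longrightarrow> p (ca_mul R a b) \<le> p a * p b"
  using assms unfolding submult_seminorm_def Let_def by blast+

lemma submult_seminorm_max:
  assumes p: "submult_seminorm R p" and q: "submult_seminorm R q"
  shows "submult_seminorm R (\<lambda>a. max (p a) (q a))"
  unfolding submult_seminorm_def Let_def
proof (intro conjI ballI allI)
  fix a b c assume a: "a \<in> ca_carrier R" and b: "b \<in> ca_carrier R"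
  show "max (p (ca_add R a b)) (q (ca_add R a b)) \<le> max (p a) (q a) + max (p b) (q b)"
    using submult_seminorm_add[OF p a b] submult_seminorm_add[OF q a b] by linarith
  show "max (p (ca_mul R a b)) (q (ca_mul R a b)) \<le> max (p a) (q a) * max (p b) (q b)"
    using submult_seminorm_mul[OF p a b] submult_seminorm_mul[OF q a b]
      mult_mono[of "p a" "max (p a) (q a)" "p b" "max (p b) (q b)"]
      mult_mono[of "q a" "max (p a) (q a)" "q b" "max (p b) (q b)"]
      submult_seminorm_nonneg[OF p] submult_seminorm_nonneg[OF q] a b
    by (smt (verit))
next
  fix a c assume a: "a \<in> ca_carrier R"
  show "0 \<le> max (p a) (q a)" using submult_seminorm_nonneg[OF p a] by linarith
  show "max (p (ca_scale R c a)) (q (ca_scale R c a)) = cmod c * max (p a) (q a)"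
    by (simp add: submult_seminorm_scale[OF p a] submult_seminorm_scale[OF q a]
        max_mult_distrib_left)
qed

lemma submult_seminorm_zero:
  assumes "comm_unital_calgebra R" "submult_seminorm R p"
  shows "p (ca_zero R) = 0"
  using submult_seminorm_scale[OF assms(2) ca_one_closed[OF assms(1)], of 0]
  by (simp add: ca_zero_def)

lemma submult_seminorm_sub_triangle:
  assumes R: "comm_unital_calgebra R" and p: "submult_seminorm R p"
    and "u \<in> ca_carrier R" "v \<in> ca_carrier R" "w \<in> ca_carrier R"
  shows "p (ca_sub R u w) \<le> p (ca_sub R u v) + p (ca_sub R v w)"
proof -
  have "p (ca_sub R u w) = p (ca_add R (ca_sub R u v) (ca_sub R v w))"
    using assms(3-) by (simp add: ca_sub_add_sub[OF R])
  also have "\<dots> \<le> p (ca_sub R u v) + p (ca_sub R v w)"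
    using assms(3-) by (intro submult_seminorm_add[OF p] ca_sub_closed[OF R])
  finally show ?thesis .
qed

definition seminorm_ball :: "'g calg \<Rightarrow> ('g \<Rightarrow> real) \<Rightarrow> 'g \<Rightarrow> real \<Rightarrow> 'g set" where
  "seminorm_ball R p a e = {b \<in> ca_carrier R. p (ca_sub R b a) < e}"

locale seminormed_calgebra =
  fixes R :: "'g calg" and P :: "('g \<Rightarrow> real) set"
  assumes calgebra: "comm_unital_calgebra R"
    and seminorms_nonempty: "P \<noteq> {}"
    and seminorms_submult: "\<And>p. p \<in> P \<Longrightarrow> submult_seminorm R p"
begin

lemmas carrier_closed = calgebra_closed[OF calgebra]

lemma seminorm_topology_eq:
  "seminorm_topology R P =
    topology_generated_by {seminorm_ball R p a e | p a e. p \<in> P \<and> a \<in> ca_carrier R \<and> e > 0}"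
  unfolding seminorm_topology_def seminorm_ball_def ..

lemma centre_in_seminorm_ball: "p \<in> P \<Longrightarrow> a \<in> ca_carrier R \<Longrightarrow> e > 0 \<Longrightarrow> a \<in> seminorm_ball R p a e"
  unfolding seminorm_ball_def
  by (simp add: ca_sub_self[OF calgebra] submult_seminorm_zero[OF calgebra seminorms_submult])

lemma openin_seminorm_ball:
  "p \<in> P \<Longrightarrow> a \<in> ca_carrier R \<Longrightarrow> e > 0 \<Longrightarrow> openin (seminorm_topology R P) (seminorm_ball R p a e)"
  unfolding seminorm_topology_eq openin_topology_generated_by_iff
  by (intro generate_topology_on.Basis) blast

lemma topspace_seminorm_topology: "topspace (seminorm_topology R P) = ca_carrier R"
proof
  show "topspace (seminorm_topology R P) \<subseteq> ca_carrier R"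
    unfolding seminorm_topology_eq by (auto simp: seminorm_ball_def)
  obtain p where "p \<in> P" using seminorms_nonempty by blast
  then show "ca_carrier R \<subseteq> topspace (seminorm_topology R P)"
    using centre_in_seminorm_ball[of p _ 1] openin_subset[OF openin_seminorm_ball[of p _ 1]]
    by auto
qed

lemma continuous_map_into_seminorm_topology:
  assumes into: "\<And>y. y \<in> topspace Y \<Longrightarrow> f y \<in> ca_carrier R"
    and near: "\<And>y p e. y \<in> topspace Y \<Longrightarrow> p \<in> P \<Longrightarrow> e > 0 \<Longrightarrow>
      \<exists>W. openin Y W \<and> y \<in> W \<and> (\<forall>z\<in>W. p (ca_sub R (f z) (f y)) < e)"
  shows "continuous_map Y (seminorm_topology R P) f"
  unfolding continuous_map_def
proof (intro conjI allI impI)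
  show "f \<in> topspace Y \<rightarrow> topspace (seminorm_topology R P)"
    using into by (simp add: topspace_seminorm_topology)
  have ball_preimage: "openin Y {y \<in> topspace Y. f y \<in> seminorm_ball R p a e}"
    if p: "p \<in> P" and a: "a \<in> ca_carrier R" for p a e
  proof (subst openin_subopen, intro ballI)
    fix y assume y: "y \<in> {y \<in> topspace Y. f y \<in> seminorm_ball R p a e}"
    then obtain W where W: "openin Y W" "y \<in> W"
      "\<And>z. z \<in> W \<Longrightarrow> p (ca_sub R (f z) (f y)) < e - p (ca_sub R (f y) a)"
      using near[of y p "e - p (ca_sub R (f y) a)"] p by (auto simp: seminorm_ball_def)
    have "p (ca_sub R (f z) a) < e" if "z \<in> W" for z
      using submult_seminorm_sub_triangle[OF calgebra seminorms_submult[OF p] _ _ a, of "f z" "f y"]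
        W(3)[OF that] into openin_subset[OF W(1)] y that by fastforce
    then show "\<exists>T. openin Y T \<and> y \<in> T \<and> T \<subseteq> {y \<in> topspace Y. f y \<in> seminorm_ball R p a e}"
      using W into openin_subset[OF W(1)] by (auto simp: seminorm_ball_def)
  qed
  fix S assume "openin (seminorm_topology R P) S"
  then have "generate_topology_on
      {seminorm_ball R p a e | p a e. p \<in> P \<and> a \<in> ca_carrier R \<and> e > 0} S"
    unfolding seminorm_topology_eq openin_topology_generated_by_iff .
  then show "openin Y {y \<in> topspace Y. f y \<in> S}"
  proof (induction rule: generate_topology_on.induct)
    case (Int a b)
    have "{y \<in> topspace Y. f y \<in> a \<inter> b} = {y \<in> topspace Y. f y \<in> a} \<inter> {y \<in> topspace Y. f y \<in> b}"
      by blast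
    then show ?case using Int.IH by (simp add: openin_Int)
  next
    case (UN K)
    have "{y \<in> topspace Y. f y \<in> \<Union>K} = (\<Union>k\<in>K. {y \<in> topspace Y. f y \<in> k})" by blast
    then show ?case using UN.IH by (simp add: openin_clauses(3))
  qed (use ball_preimage in auto)
qed

lemma seminorm_ballD:
  "b \<in> seminorm_ball R p a e \<Longrightarrow> b \<in> ca_carrier R \<and> p (ca_sub R b a) < e"
  unfolding seminorm_ball_def by blast

lemma continuous_map_ca_add:
  "continuous_map (prod_topology (seminorm_topology R P) (seminorm_topology R P))
     (seminorm_topology R P) (\<lambda>(a, b). ca_add R a b)"
proof (rule continuous_map_into_seminorm_topology)
  fix z p and e :: real
  assume "z \<in> topspace (prod_topology (seminorm_topology R P) (seminorm_topology R P))"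
    and p: "p \<in> P" and e: "e > 0"
  then obtain a b where z: "z = (a, b)" and a: "a \<in> ca_carrier R" and b: "b \<in> ca_carrier R"
    by (auto simp: topspace_seminorm_topology)
  let ?W = "seminorm_ball R p a (e/2) \<times> seminorm_ball R p b (e/2)"
  have "p (ca_sub R (ca_add R x y) (ca_add R a b)) < e" if "(x, y) \<in> ?W" for x y
  proof -
    have x: "x \<in> ca_carrier R" "p (ca_sub R x a) < e/2"
      and y: "y \<in> ca_carrier R" "p (ca_sub R y b) < e/2"
      using that by (auto dest!: seminorm_ballD)
    have "p (ca_sub R (ca_add R x y) (ca_add R a b)) \<le> p (ca_sub R x a) + p (ca_sub R y b)"
      unfolding ca_add_sub_add[OF calgebra x(1) y(1) a b]
      by (intro submult_seminorm_add[OF seminorms_submult[OF p]] carrier_closed x y a b)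
    then show ?thesis using x y by linarith
  qed
  then show "\<exists>W. openin (prod_topology (seminorm_topology R P) (seminorm_topology R P)) W \<and> z \<in> W \<and>
      (\<forall>w\<in>W. p (ca_sub R ((\<lambda>(a, b). ca_add R a b) w) ((\<lambda>(a, b). ca_add R a b) z)) < e)"
    using openin_seminorm_ball[OF p a] openin_seminorm_ball[OF p b] e
      centre_in_seminorm_ball[OF p a] centre_in_seminorm_ball[OF p b]
    by (intro exI[of _ ?W]) (auto simp: z openin_prod_Times_iff)
qed (auto simp: topspace_seminorm_topology carrier_closed)

lemma continuous_map_ca_scale:
  "continuous_map (prod_topology euclidean (seminorm_topology R P)) (seminorm_topology R P)
     (\<lambda>(c, a). ca_scale R c a)"
proof (rule continuous_map_into_seminorm_topology)
  fix z :: "complex \<times> 'g" and p and e :: real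
  assume "z \<in> topspace (prod_topology euclidean (seminorm_topology R P))"
    and p: "p \<in> P" and e: "e > 0"
  then obtain c0 a where z: "z = (c0, a)" and a: "a \<in> ca_carrier R"
    by (auto simp: topspace_seminorm_topology)
  note p_nonneg = submult_seminorm_nonneg[OF seminorms_submult[OF p]]
  define M where "M = cmod c0 + 1 + p a"
  define h where "h = min 1 (e / (2 * M))"
  have M: "M \<ge> 1" using p_nonneg[OF a] by (simp add: M_def)
  have h: "h > 0" "h \<le> 1" using e M by (auto simp: h_def)
  have "h * M \<le> e / (2 * M) * M" using M by (intro mult_right_mono) (auto simp: h_def)
  also have "\<dots> < e" using e M by simp
  finally have hM: "h * (cmod c0 + 1 + p a) < e" by (simp add: M_def)
  let ?W = "ball c0 h \<times> seminorm_ball R p a h"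
  have "p (ca_sub R (ca_scale R c x) (ca_scale R c0 a)) < e" if "(c, x) \<in> ?W" for c x
  proof -
    have x: "x \<in> ca_carrier R" and px: "p (ca_sub R x a) < h" and dc: "cmod (c - c0) < h"
      using that by (auto dest!: seminorm_ballD simp: dist_norm norm_minus_commute)
    have "p (ca_sub R (ca_scale R c x) (ca_scale R c0 a))
        \<le> cmod c * p (ca_sub R x a) + cmod (c - c0) * p a"
      unfolding ca_scale_sub_scale[OF calgebra x a]
      using submult_seminorm_add[OF seminorms_submult[OF p]
          ca_scale_closed[OF calgebra] ca_scale_closed[OF calgebra]] x a
      by (simp add: submult_seminorm_scale[OF seminorms_submult[OF p]] carrier_closed)
    also have "\<dots> \<le> (cmod c0 + 1) * h + h * p a"
      using norm_triangle_ineq2[of c c0] dc px h(2) p_nonneg[OF a]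
        p_nonneg[OF ca_sub_closed[OF calgebra x a]]
      by (intro add_mono mult_mono) auto
    finally show ?thesis using hM by (simp add: algebra_simps)
  qed
  then show "\<exists>W. openin (prod_topology euclidean (seminorm_topology R P)) W \<and> z \<in> W \<and>
      (\<forall>w\<in>W. p (ca_sub R ((\<lambda>(c, a). ca_scale R c a) w) ((\<lambda>(c, a). ca_scale R c a) z)) < e)"
    using openin_seminorm_ball[OF p a h(1)] centre_in_seminorm_ball[OF p a h(1)] h(1)
    by (intro exI[of _ ?W]) (auto simp: z openin_prod_Times_iff)
qed (auto simp: topspace_seminorm_topology carrier_closed)

lemma continuous_map_ca_mul:
  assumes a: "a \<in> ca_carrier R"
  shows "continuous_map (seminorm_topology R P) (seminorm_topology R P) (ca_mul R a)"
proof (rule continuous_map_into_seminorm_topology)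
  fix b p and e :: real
  assume "b \<in> topspace (seminorm_topology R P)" and p: "p \<in> P" and e: "e > 0"
  then have b: "b \<in> ca_carrier R" by (simp add: topspace_seminorm_topology)
  note p_nonneg = submult_seminorm_nonneg[OF seminorms_submult[OF p]]
  define h where "h = e / (p a + 1)"
  have h: "h > 0" "(p a + 1) * h = e" using e p_nonneg[OF a] by (auto simp: h_def)
  have "p (ca_sub R (ca_mul R a x) (ca_mul R a b)) < e" if "x \<in> seminorm_ball R p b h" for x
  proof -
    have x: "x \<in> ca_carrier R" and px: "p (ca_sub R x b) < h"
      using that by (auto dest: seminorm_ballD)
    have "p (ca_sub R (ca_mul R a x) (ca_mul R a b)) \<le> p a * p (ca_sub R x b)"
      unfolding ca_mul_sub_mul[OF calgebra a x b]
      by (intro submult_seminorm_mul[OF seminorms_submult[OF p] a] carrier_closed x b)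
    also have "\<dots> \<le> p a * h" using px p_nonneg[OF a] by (simp add: mult_left_mono)
    also have "\<dots> < e" using h by (simp add: algebra_simps)
    finally show ?thesis .
  qed
  then show "\<exists>W. openin (seminorm_topology R P) W \<and> b \<in> W \<and>
      (\<forall>x\<in>W. p (ca_sub R (ca_mul R a x) (ca_mul R a b)) < e)"
    using openin_seminorm_ball[OF p b h(1)] centre_in_seminorm_ball[OF p b h(1)] by blast
qed (use a in \<open>auto simp: topspace_seminorm_topology carrier_closed\<close>)

lemma topological_calgebra_seminorm_topology: "topological_calgebra R (seminorm_topology R P)"
  unfolding topological_calgebra_def
proof (intro conjI ballI)
  fix a assume a: "a \<in> ca_carrier R"
  show "continuous_map (seminorm_topology R P) (seminorm_topology R P) (ca_mul R a)"
    by (rule continuous_map_ca_mul[OF a])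
  show "continuous_map (seminorm_topology R P) (seminorm_topology R P) (\<lambda>b. ca_mul R b a)"
    by (rule continuous_map_eq[OF continuous_map_ca_mul[OF a]])
      (simp add: ca_mul_commute[OF calgebra a] topspace_seminorm_topology)
qed (rule calgebra topspace_seminorm_topology continuous_map_ca_add continuous_map_ca_scale)+

lemma lmc_algebra_seminorm_topology:
  assumes "\<And>p q. p \<in> P \<Longrightarrow> q \<in> P \<Longrightarrow> \<exists>r\<in>P. \<forall>a\<in>ca_carrier R. p a \<le> r a \<and> q a \<le> r a"
  shows "lmc_algebra R (seminorm_topology R P)"
  unfolding lmc_algebra_def
proof (intro conjI exI[of _ P])
  show "\<forall>p\<in>P. \<forall>q\<in>P. \<exists>r\<in>P. \<forall>a\<in>ca_carrier R. p a \<le> r a \<and> q a \<le> r a"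
    using assms by blast
qed (use topological_calgebra_seminorm_topology seminorms_nonempty seminorms_submult in auto)

lemma continuous_map_seminorm_bounded_functional:
  assumes add: "\<And>a b. a \<in> ca_carrier R \<Longrightarrow> b \<in> ca_carrier R \<Longrightarrow> f (ca_add R a b) = f a + f b"
    and scale: "\<And>c a. a \<in> ca_carrier R \<Longrightarrow> f (ca_scale R c a) = c * f a"
    and p: "p \<in> P" and bound: "\<And>a. a \<in> ca_carrier R \<Longrightarrow> cmod (f a) \<le> p a"
  shows "continuous_map (seminorm_topology R P) euclidean f"
  unfolding continuous_map_def
proof (intro conjI allI impI)
  show "f \<in> topspace (seminorm_topology R P) \<rightarrow> topspace euclidean" by simp
  fix S :: "complex set" assume "openin euclidean S"
  show "openin (seminorm_topology R P) {a \<in> topspace (seminorm_topology R P). f a \<in> S}"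
  proof (subst openin_subopen, intro ballI)
    fix a assume "a \<in> {a \<in> topspace (seminorm_topology R P). f a \<in> S}"
    then have a: "a \<in> ca_carrier R" and "f a \<in> S" by (auto simp: topspace_seminorm_topology)
    moreover have "open S" using \<open>openin euclidean S\<close> by simp
    ultimately obtain e where e: "e > 0" "ball (f a) e \<subseteq> S"
      using open_contains_ball by blast
    have "f b \<in> S" if "b \<in> seminorm_ball R p a e" for b
    proof -
      have b: "b \<in> ca_carrier R" and "p (ca_sub R b a) < e"
        using that by (auto dest: seminorm_ballD)
      moreover have "f (ca_sub R b a) = f b - f a"
        using a b unfolding ca_sub_def by (simp add: add scale carrier_closed)
      ultimately show ?thesis
        using bound[OF ca_sub_closed[OF calgebra b a]] e(2)
        by (auto simp: dist_norm norm_minus_commute)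
    qed
    then show "\<exists>W. openin (seminorm_topology R P) W \<and> a \<in> W \<and>
        W \<subseteq> {a \<in> topspace (seminorm_topology R P). f a \<in> S}"
      using openin_seminorm_ball[OF p a e(1)] centre_in_seminorm_ball[OF p a e(1)]
        openin_subset[OF openin_seminorm_ball[OF p a e(1)]] by blast
  qed
qed

end

section \<open>Characters\<close>

lemma charactersD:
  assumes "ch \<in> characters R T"
  shows character_add:
      "\<And>a b. a \<in> ca_carrier R \<Longrightarrow> b \<in> ca_carrier R \<Longrightarrow> ch (ca_add R a b) = ch a + ch b"
    and character_mul:
      "\<And>a b. a \<in> ca_carrier R \<Longrightarrow> b \<in> ca_carrier R \<Longrightarrow> ch (ca_mul R a b) = ch a * ch b"
    and character_scale: "\<And>c a. a \<in> ca_carrier R \<Longrightarrow> ch (ca_scale R c a) = c * ch a"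
    and character_nonzero: "\<exists>a\<in>ca_carrier R. ch a \<noteq> 0"
    and character_extensional: "ch \<in> extensional (ca_carrier R)"
  using assms unfolding characters_def by blast+

lemma character_one:
  assumes R: "comm_unital_calgebra R" and ch: "ch \<in> characters R T"
  shows "ch (ca_one R) = 1"
proof -
  obtain a where a: "a \<in> ca_carrier R" "ch a \<noteq> 0" using character_nonzero[OF ch] by blast
  have "ch a = ch (ca_one R) * ch a"
    using character_mul[OF ch ca_one_closed[OF R] a(1)] ca_one_mul[OF R a(1)] by simp
  then show ?thesis using a(2) by simp
qed

lemma character_zero:
  assumes "comm_unital_calgebra R" "ch \<in> characters R T"
  shows "ch (ca_zero R) = 0"
  using character_scale[OF assms(2) ca_one_closed[OF assms(1)], of 0] by (simp add: ca_zero_def)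

lemma Hausdorff_space_spectrum_top: "Hausdorff_space (spectrum_top R T)"
  unfolding spectrum_top_def
  by (intro Hausdorff_space_subtopology) (simp add: Hausdorff_space_product_topology)

section \<open>The algebra of germs along \<open>K\<close>\<close>

locale compact_in_chart =
  fixes X :: "'a topology" and Atl :: "('a set \<times> ('a \<Rightarrow> 'n::euclidean_space)) set"
    and U K :: "'a set" and \<phi> :: "'a \<Rightarrow> 'n"
  assumes manifold: "smooth_manifold X Atl" and chart: "(U, \<phi>) \<in> Atl"
    and compact: "compactin X K" and K_subset: "K \<subseteq> U"
begin

abbreviation "G \<equiv> germ_alg X Atl U K"
abbreviation "gm \<equiv> germ X Atl U K"
abbreviation "T \<equiv> germ_top X Atl U \<phi> K"

lemma K_subset_topspace: "K \<subseteq> topspace X"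
  using compact compactin_subset_topspace by blast

lemma openin_U: "openin X U"
  using is_chart_openin[OF smooth_manifold_chart[OF manifold chart]] .

definition smooth_near_K :: "('a \<Rightarrow> complex) \<Rightarrow> bool" where
  "smooth_near_K f \<longleftrightarrow> (\<exists>V. openin X V \<and> K \<subseteq> V \<and> V \<subseteq> U \<and> smooth_fun X Atl V f)"

definition nhds_K :: "'a filter" where
  "nhds_K = (INF V\<in>{V. openin X V \<and> K \<subseteq> V}. principal V)"

lemma eventually_nhds_K: "eventually P nhds_K \<longleftrightarrow> (\<exists>V. openin X V \<and> K \<subseteq> V \<and> (\<forall>x\<in>V. P x))"
proof -
  have "eventually P nhds_K \<longleftrightarrow> (\<exists>V\<in>{V. openin X V \<and> K \<subseteq> V}. eventually P (principal V))"
    unfolding nhds_K_def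
  proof (rule eventually_INF_base)
    show "{V. openin X V \<and> K \<subseteq> V} \<noteq> {}" using K_subset_topspace by auto
    fix V W assume "V \<in> {V. openin X V \<and> K \<subseteq> V}" "W \<in> {V. openin X V \<and> K \<subseteq> V}"
    then show "\<exists>S\<in>{V. openin X V \<and> K \<subseteq> V}. principal S \<le> inf (principal V) (principal W)"
      by (intro bexI[of _ "V \<inter> W"]) auto
  qed
  then show ?thesis by (auto simp: eventually_principal)
qed

lemma eventually_nhds_K_on_K: "eventually P nhds_K \<Longrightarrow> x \<in> K \<Longrightarrow> P x"
  unfolding eventually_nhds_K by blast

lemma germ_eq:
  assumes "eventually (\<lambda>x. f x = g x) nhds_K"
  shows "gm f = gm g"
proof -
  obtain W where W: "openin X W" "K \<subseteq> W" "\<forall>x\<in>W. f x = g x"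
    using assms unfolding eventually_nhds_K by blast
  have *: "h \<in> gm f2" if "h \<in> gm f1" and "\<forall>x\<in>W. f1 x = f2 x" for h f1 f2
  proof -
    obtain V where V: "openin X V" "K \<subseteq> V" "V \<subseteq> U" "smooth_fun X Atl V h" "\<forall>x\<in>V. h x = f1 x"
      using \<open>h \<in> gm f1\<close> unfolding germ_def by blast
    have "openin X (V \<inter> W)" using V(1) W(1) by blast
    moreover have "smooth_fun X Atl (V \<inter> W) h"
      using smooth_fun_subset[OF V(4) \<open>openin X (V \<inter> W)\<close>] by blast
    ultimately show ?thesis
      using V W that(2) unfolding germ_def by (intro CollectI exI[of _ "V \<inter> W"]) auto
  qed
  moreover have "\<forall>x\<in>W. g x = f x" using W(3) by simp
  ultimately show ?thesis using W(3) by blast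
qed

lemma germ_alg_carrier_iff: "a \<in> ca_carrier G \<longleftrightarrow> (\<exists>f. smooth_near_K f \<and> a = gm f)"
  unfolding germ_alg_def smooth_near_K_def by auto

lemma germ_in_carrier: "smooth_near_K f \<Longrightarrow> gm f \<in> ca_carrier G"
  using germ_alg_carrier_iff by blast

lemma smooth_near_K_in_germ: "smooth_near_K f \<Longrightarrow> f \<in> gm f"
  unfolding smooth_near_K_def germ_def by blast

lemma germ_rep_in_germ:
  assumes "smooth_near_K f"
  shows "germ_rep (gm f) \<in> gm f"
  unfolding germ_rep_def by (rule someI[of "\<lambda>g. g \<in> gm f", OF smooth_near_K_in_germ[OF assms]])

lemma germ_memD:
  assumes "g \<in> gm f"
  obtains V where "openin X V" "K \<subseteq> V" "V \<subseteq> U" "smooth_fun X Atl V g" "\<And>x. x \<in> V \<Longrightarrow> g x = f x"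
  using assms unfolding germ_def by blast

lemma eventually_germ_rep:
  assumes "smooth_near_K f"
  shows "eventually (\<lambda>x. germ_rep (gm f) x = f x) nhds_K"
proof -
  obtain V where "openin X V" "K \<subseteq> V" "\<And>x. x \<in> V \<Longrightarrow> germ_rep (gm f) x = f x"
    using germ_memD[OF germ_rep_in_germ[OF assms]] by metis
  then show ?thesis unfolding eventually_nhds_K by blast
qed

text \<open>\<open>germ_rep\<close> picks an arbitrary representative by choice; only its values near \<open>K\<close>
  are determined by the germ.\<close>
lemma germ_rep_on_K: "smooth_near_K f \<Longrightarrow> x \<in> K \<Longrightarrow> germ_rep (gm f) x = f x"
  using eventually_germ_rep eventually_nhds_K_on_K by blast

lemma germ_alg_carrierE:
  assumes "a \<in> ca_carrier G"
  obtains f where "smooth_near_K f" "a = gm f"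
  using assms unfolding germ_alg_carrier_iff by blast

lemma smooth_near_K_germ_rep:
  assumes "a \<in> ca_carrier G"
  shows "smooth_near_K (germ_rep a)"
proof -
  obtain f where "smooth_near_K f" "a = gm f" using germ_alg_carrierE[OF assms] .
  then show ?thesis
    using germ_memD[OF germ_rep_in_germ] unfolding smooth_near_K_def by metis
qed

lemma germ_germ_rep:
  assumes "a \<in> ca_carrier G"
  shows "gm (germ_rep a) = a"
proof -
  obtain f where "smooth_near_K f" "a = gm f" using germ_alg_carrierE[OF assms] .
  then show ?thesis using germ_eq[OF eventually_germ_rep] by simp
qed

lemma smooth_near_K_binop:
  assumes f: "smooth_near_K f" and g: "smooth_near_K g"
    and op: "\<And>V. smooth_fun X Atl V f \<Longrightarrow> smooth_fun X Atl V g \<Longrightarrow>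
      smooth_fun X Atl V (\<lambda>x. F (f x) (g x))"
  shows "smooth_near_K (\<lambda>x. F (f x) (g x))"
proof -
  obtain V1 V2 where V1: "openin X V1" "K \<subseteq> V1" "V1 \<subseteq> U" "smooth_fun X Atl V1 f"
    and V2: "openin X V2" "K \<subseteq> V2" "V2 \<subseteq> U" "smooth_fun X Atl V2 g"
    using f g unfolding smooth_near_K_def by blast
  have "smooth_fun X Atl (V1 \<inter> V2) f" "smooth_fun X Atl (V1 \<inter> V2) g"
    using smooth_fun_subset V1 V2 by (meson inf_le1 inf_le2 openin_Int)+
  then show ?thesis
    unfolding smooth_near_K_def using V1 V2 op by (intro exI[of _ "V1 \<inter> V2"]) auto
qed

lemma smooth_near_K_const: "smooth_near_K (\<lambda>x. c)"
  unfolding smooth_near_K_def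
  using smooth_fun_const[OF manifold openin_U] K_subset openin_U by blast

lemma smooth_near_K_add: "smooth_near_K f \<Longrightarrow> smooth_near_K g \<Longrightarrow> smooth_near_K (\<lambda>x. f x + g x)"
  using smooth_near_K_binop[of f g "(+)"] smooth_fun_add[OF manifold] by blast

lemma smooth_near_K_mult: "smooth_near_K f \<Longrightarrow> smooth_near_K g \<Longrightarrow> smooth_near_K (\<lambda>x. f x * g x)"
  using smooth_near_K_binop[of f g "(*)"] smooth_fun_mult[OF manifold] by blast

lemma smooth_near_K_cmult: "smooth_near_K f \<Longrightarrow> smooth_near_K (\<lambda>x. c * f x)"
  by (rule smooth_near_K_mult[OF smooth_near_K_const])

lemma smooth_near_K_cnj: "smooth_near_K f \<Longrightarrow> smooth_near_K (\<lambda>x. cnj (f x))"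
  using smooth_near_K_binop[of f f "\<lambda>u v. cnj u"] smooth_fun_cnj[OF manifold] by blast

lemma smooth_near_K_uminus: "smooth_near_K f \<Longrightarrow> smooth_near_K (\<lambda>x. - f x)"
  using smooth_near_K_cmult[of f "-1"] by simp

lemmas smooth_near_K_intros =
  smooth_near_K_const smooth_near_K_add smooth_near_K_mult smooth_near_K_cmult smooth_near_K_cnj
  smooth_near_K_uminus

lemma germ_alg_simps:
  "ca_add G a b = gm (\<lambda>x. germ_rep a x + germ_rep b x)"
  "ca_mul G a b = gm (\<lambda>x. germ_rep a x * germ_rep b x)"
  "ca_scale G c a = gm (\<lambda>x. c * germ_rep a x)"
  "ca_one G = gm (\<lambda>x. 1)"
  by (simp_all add: germ_alg_def)

lemma germ_ops:
  assumes "smooth_near_K f" "smooth_near_K g"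
  shows germ_add: "ca_add G (gm f) (gm g) = gm (\<lambda>x. f x + g x)"
    and germ_mul: "ca_mul G (gm f) (gm g) = gm (\<lambda>x. f x * g x)"
    and germ_scale: "ca_scale G c (gm f) = gm (\<lambda>x. c * f x)"
  unfolding germ_alg_simps
  by (intro germ_eq; use eventually_germ_rep[OF assms(1)] eventually_germ_rep[OF assms(2)] in
      \<open>eventually_elim\<close>; simp)+

lemma germ_zero: "ca_zero G = gm (\<lambda>x. 0)"
  unfolding ca_zero_def germ_alg_simps(4) germ_scale[OF smooth_near_K_const smooth_near_K_const]
  by simp

lemmas germ_alg_eqs = germ_ops germ_zero germ_alg_simps(4) smooth_near_K_intros germ_in_carrier

lemma comm_unital_calgebra_germ_alg: "comm_unital_calgebra G"
  unfolding comm_unital_calgebra_def Let_def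
proof (intro conjI ballI allI)
  show "ca_one G \<in> ca_carrier G" by (simp add: germ_alg_eqs)
  fix a b c assume "a \<in> ca_carrier G" "b \<in> ca_carrier G" "c \<in> ca_carrier G"
  then obtain f g h where "smooth_near_K f" "smooth_near_K g" "smooth_near_K h"
    and "a = gm f" "b = gm g" "c = gm h" by (metis germ_alg_carrierE)
  then show "ca_add G a b \<in> ca_carrier G" "ca_mul G a b \<in> ca_carrier G"
    "ca_add G (ca_add G a b) c = ca_add G a (ca_add G b c)"
    "ca_mul G (ca_mul G a b) c = ca_mul G a (ca_mul G b c)"
    "ca_mul G a (ca_add G b c) = ca_add G (ca_mul G a b) (ca_mul G a c)"
    by (simp_all add: germ_alg_eqs algebra_simps)
next
  fix a b assume "a \<in> ca_carrier G" "b \<in> ca_carrier G"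
  then obtain f g where "smooth_near_K f" "smooth_near_K g" "a = gm f" "b = gm g"
    by (metis germ_alg_carrierE)
  then show "ca_add G a b = ca_add G b a" "ca_mul G a b = ca_mul G b a"
    by (simp_all add: germ_alg_eqs algebra_simps)
next
  fix a assume "a \<in> ca_carrier G"
  then obtain f where "smooth_near_K f" "a = gm f" by (metis germ_alg_carrierE)
  then show "ca_add G a (ca_zero G) = a" "ca_add G a (ca_scale G (-1) a) = ca_zero G"
    "ca_mul G (ca_one G) a = a"
    by (simp_all add: germ_alg_eqs)
next
  fix c d :: complex and a assume "a \<in> ca_carrier G"
  then obtain f where "smooth_near_K f" "a = gm f" by (metis germ_alg_carrierE)
  then show "ca_scale G c (ca_scale G d a) = ca_scale G (c * d) a"
    "ca_scale G (c + d) a = ca_add G (ca_scale G c a) (ca_scale G d a)" "ca_scale G 1 a = a"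
    by (simp_all add: germ_alg_eqs algebra_simps)
next
  fix c :: complex and a b assume "a \<in> ca_carrier G" "b \<in> ca_carrier G"
  then obtain f g where "smooth_near_K f" "smooth_near_K g" "a = gm f" "b = gm g"
    by (metis germ_alg_carrierE)
  then show "ca_scale G c a \<in> ca_carrier G"
    "ca_scale G c (ca_add G a b) = ca_add G (ca_scale G c a) (ca_scale G c b)"
    "ca_scale G c (ca_mul G a b) = ca_mul G (ca_scale G c a) b"
    by (simp_all add: germ_alg_eqs algebra_simps)
qed

lemma germ_rep_ops_on_K:
  assumes "a \<in> ca_carrier G" "b \<in> ca_carrier G" "x \<in> K"
  shows germ_rep_add_on_K: "germ_rep (ca_add G a b) x = germ_rep a x + germ_rep b x"
    and germ_rep_mul_on_K: "germ_rep (ca_mul G a b) x = germ_rep a x * germ_rep b x"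
    and germ_rep_scale_on_K: "germ_rep (ca_scale G c a) x = c * germ_rep a x"
proof -
  obtain f g where "smooth_near_K f" "smooth_near_K g" "a = gm f" "b = gm g"
    using assms(1,2) by (metis germ_alg_carrierE)
  then show "germ_rep (ca_add G a b) x = germ_rep a x + germ_rep b x"
    "germ_rep (ca_mul G a b) x = germ_rep a x * germ_rep b x"
    "germ_rep (ca_scale G c a) x = c * germ_rep a x"
    using assms(3) by (simp_all add: germ_alg_eqs germ_rep_on_K)
qed

lemma germ_rep_one_on_K: "x \<in> K \<Longrightarrow> germ_rep (ca_one G) x = 1"
  by (simp add: germ_alg_simps(4) germ_rep_on_K smooth_near_K_const)

lemma germ_rep_sub_on_K:
  "a \<in> ca_carrier G \<Longrightarrow> b \<in> ca_carrier G \<Longrightarrow> x \<in> K \<Longrightarrow>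
    germ_rep (ca_sub G a b) x = germ_rep a x - germ_rep b x"
  unfolding ca_sub_def
  by (simp add: germ_rep_ops_on_K ca_scale_closed[OF comm_unital_calgebra_germ_alg])

lemma germ_rep_continuous_near_K:
  assumes "a \<in> ca_carrier G"
  obtains V where "openin X V" "K \<subseteq> V" "V \<subseteq> U" "smooth_fun X Atl V (germ_rep a)"
    "continuous_map (subtopology X V) euclidean (germ_rep a)"
  using smooth_near_K_germ_rep[OF assms] smooth_fun_continuous_map[OF manifold chart]
  unfolding smooth_near_K_def by metis

lemma continuous_map_germ_rep_K:
  assumes "a \<in> ca_carrier G"
  shows "continuous_map (subtopology X K) euclidean (germ_rep a)"
proof -
  obtain V where "K \<subseteq> V" "continuous_map (subtopology X V) euclidean (germ_rep a)"
    using germ_rep_continuous_near_K[OF assms] by metis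
  then show ?thesis
    using continuous_map_from_subtopology[of "subtopology X V" euclidean "germ_rep a" K]
    by (simp add: subtopology_subtopology Int_absorb1)
qed

lemma bounded_germ_rep_K: "a \<in> ca_carrier G \<Longrightarrow> bounded (germ_rep a ` K)"
  using image_compactin[OF _ continuous_map_germ_rep_K] compact
  by (simp add: compactin_subtopology compact_imp_bounded)

definition sup_norm_K :: "('a \<Rightarrow> complex) set \<Rightarrow> real" where
  "sup_norm_K a = Sup (insert 0 ((\<lambda>x. cmod (germ_rep a x)) ` K))"

lemma norm_germ_rep_le_sup_norm_K:
  "a \<in> ca_carrier G \<Longrightarrow> x \<in> K \<Longrightarrow> cmod (germ_rep a x) \<le> sup_norm_K a"
  unfolding sup_norm_K_def
  by (rule cSup_upper)
    (auto intro!: bounded_imp_bdd_above simp: bounded_norm_comp bounded_germ_rep_K)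

lemma sup_norm_K_nonneg: "a \<in> ca_carrier G \<Longrightarrow> 0 \<le> sup_norm_K a"
  unfolding sup_norm_K_def
  by (rule cSup_upper)
    (auto intro!: bounded_imp_bdd_above simp: bounded_norm_comp bounded_germ_rep_K)

lemma sup_norm_K_least: "(\<And>x. x \<in> K \<Longrightarrow> cmod (germ_rep a x) \<le> r) \<Longrightarrow> 0 \<le> r \<Longrightarrow> sup_norm_K a \<le> r"
  unfolding sup_norm_K_def by (rule cSup_least) auto

lemma sup_norm_K_scale_le:
  "a \<in> ca_carrier G \<Longrightarrow> sup_norm_K (ca_scale G c a) \<le> cmod c * sup_norm_K a"
  by (rule sup_norm_K_least)
    (simp_all add: germ_rep_scale_on_K norm_mult mult_left_mono norm_germ_rep_le_sup_norm_K
      sup_norm_K_nonneg)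

lemma submult_seminorm_sup_norm_K: "submult_seminorm G sup_norm_K"
  unfolding submult_seminorm_def Let_def
proof (intro conjI ballI allI)
  note R = comm_unital_calgebra_germ_alg
  fix a assume a: "a \<in> ca_carrier G"
  show "0 \<le> sup_norm_K a" by (rule sup_norm_K_nonneg[OF a])
  fix c :: complex
  show "sup_norm_K (ca_scale G c a) = cmod c * sup_norm_K a"
  proof (cases "c = 0")
    case True
    then show ?thesis
      using sup_norm_K_scale_le[OF a, of 0] sup_norm_K_nonneg[OF ca_scale_closed[OF R a, of 0]]
      by simp
  next
    case False
    have "ca_scale G (inverse c) (ca_scale G c a) = a"
      using R a False unfolding comm_unital_calgebra_def Let_def by (metis left_inverse)
    then have "sup_norm_K a \<le> cmod (inverse c) * sup_norm_K (ca_scale G c a)"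
      using sup_norm_K_scale_le[OF ca_scale_closed[OF R a, of c], of "inverse c"] by simp
    then have "cmod c * sup_norm_K a \<le> cmod c * (cmod (inverse c) * sup_norm_K (ca_scale G c a))"
      by (rule mult_left_mono) simp
    moreover have "cmod c * (cmod (inverse c) * sup_norm_K (ca_scale G c a)) =
        sup_norm_K (ca_scale G c a)"
      using False by (simp add: norm_inverse)
    ultimately have "cmod c * sup_norm_K a \<le> sup_norm_K (ca_scale G c a)" by linarith
    then show ?thesis using sup_norm_K_scale_le[OF a, of c] by (rule antisym[rotated])
  qed
next
  fix a b assume a: "a \<in> ca_carrier G" and b: "b \<in> ca_carrier G"
  show "sup_norm_K (ca_add G a b) \<le> sup_norm_K a + sup_norm_K b"
    using norm_germ_rep_le_sup_norm_K[OF a] norm_germ_rep_le_sup_norm_K[OF b]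
      sup_norm_K_nonneg[OF a] sup_norm_K_nonneg[OF b]
    by (intro sup_norm_K_least)
      (auto simp: germ_rep_add_on_K[OF a b] intro: norm_triangle_le add_mono)
  show "sup_norm_K (ca_mul G a b) \<le> sup_norm_K a * sup_norm_K b"
    using norm_germ_rep_le_sup_norm_K[OF a] norm_germ_rep_le_sup_norm_K[OF b]
      sup_norm_K_nonneg[OF a] sup_norm_K_nonneg[OF b]
    by (intro sup_norm_K_least) (auto simp: germ_rep_mul_on_K[OF a b] norm_mult intro: mult_mono)
qed

definition germ_seminorms :: "(('a \<Rightarrow> complex) set \<Rightarrow> real) set" where
  "germ_seminorms = {q. submult_seminorm G q \<and>
     (\<forall>V. openin X V \<and> K \<subseteq> V \<and> V \<subseteq> U \<longrightarrow>
        (\<exists>m C c. compactin X C \<and> C \<subseteq> V \<and>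
           (\<forall>f. smooth_fun X Atl V f \<longrightarrow> q (gm f) \<le> c * Nsn U \<phi> m C f)))}"

lemma germ_top_eq: "T = seminorm_topology G germ_seminorms"
  unfolding germ_top_def germ_seminorms_def ..

lemma sup_norm_K_in_germ_seminorms: "sup_norm_K \<in> germ_seminorms"
  unfolding germ_seminorms_def
proof (intro CollectI conjI allI impI submult_seminorm_sup_norm_K)
  fix V assume V: "openin X V \<and> K \<subseteq> V \<and> V \<subseteq> U"
  have "sup_norm_K (gm f) \<le> 1 * Nsn U \<phi> 0 K f" if f: "smooth_fun X Atl V f" for f
  proof -
    have "smooth_near_K f" unfolding smooth_near_K_def using V f by blast
    then show ?thesis
      using norm_le_Nsn[OF manifold chart f _ compact] Nsn_nonneg[OF manifold chart f _ compact] V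
      by (simp add: sup_norm_K_least germ_rep_on_K)
  qed
  then show "\<exists>m C c. compactin X C \<and> C \<subseteq> V \<and>
      (\<forall>f. smooth_fun X Atl V f \<longrightarrow> sup_norm_K (gm f) \<le> c * Nsn U \<phi> m C f)"
    using compact V by (intro exI[of _ 0] exI[of _ K] exI[of _ 1]) auto
qed

lemma germ_seminormsD:
  assumes "p \<in> germ_seminorms"
  shows germ_seminorms_submult: "submult_seminorm G p"
    and germ_seminorms_dominated: "\<And>V. openin X V \<Longrightarrow> K \<subseteq> V \<Longrightarrow> V \<subseteq> U \<Longrightarrow>
      \<exists>m C c. compactin X C \<and> C \<subseteq> V \<and>
        (\<forall>f. smooth_fun X Atl V f \<longrightarrow> p (gm f) \<le> c * Nsn U \<phi> m C f)"
  using assms unfolding germ_seminorms_def by blast+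

lemma germ_seminorms_max:
  assumes p: "p \<in> germ_seminorms" and q: "q \<in> germ_seminorms"
  shows "(\<lambda>a. max (p a) (q a)) \<in> germ_seminorms"
  unfolding germ_seminorms_def
proof (intro CollectI conjI allI impI)
  show "submult_seminorm G (\<lambda>a. max (p a) (q a))"
    by (rule submult_seminorm_max[OF germ_seminorms_submult[OF p] germ_seminorms_submult[OF q]])
  fix V assume V: "openin X V \<and> K \<subseteq> V \<and> V \<subseteq> U"
  obtain m1 C1 c1 where 1: "compactin X C1" "C1 \<subseteq> V"
    "\<And>f. smooth_fun X Atl V f \<Longrightarrow> p (gm f) \<le> c1 * Nsn U \<phi> m1 C1 f"
    using germ_seminorms_dominated[OF p] V by meson
  obtain m2 C2 c2 where 2: "compactin X C2" "C2 \<subseteq> V"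
    "\<And>f. smooth_fun X Atl V f \<Longrightarrow> q (gm f) \<le> c2 * Nsn U \<phi> m2 C2 f"
    using germ_seminorms_dominated[OF q] V by meson
  let ?m = "max m1 m2" and ?C = "C1 \<union> C2" and ?c = "max (max c1 c2) 0"
  have C: "compactin X ?C" "?C \<subseteq> V" using 1 2 by (auto intro: compactin_Un)
  have "max (p (gm f)) (q (gm f)) \<le> ?c * Nsn U \<phi> ?m ?C f" if f: "smooth_fun X Atl V f" for f
  proof -
    have VU: "V \<subseteq> U" using V by blast
    have dominated: "c' * Nsn U \<phi> m' C' f \<le> ?c * Nsn U \<phi> ?m ?C f"
      if "c' \<le> ?c" "m' \<le> ?m" "C' \<subseteq> ?C" "compactin X C'" "C' \<subseteq> V" for c' m' C'
    proof -
      have "c' * Nsn U \<phi> m' C' f \<le> ?c * Nsn U \<phi> m' C' f"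
        using that Nsn_nonneg[OF manifold chart f VU] by (intro mult_right_mono) auto
      also have "\<dots> \<le> ?c * Nsn U \<phi> ?m ?C f"
        using that Nsn_mono[OF manifold chart f VU C] by (intro mult_left_mono) auto
      finally show ?thesis .
    qed
    have "p (gm f) \<le> ?c * Nsn U \<phi> ?m ?C f"
      using 1 by (intro order_trans[OF 1(3)[OF f] dominated]) auto
    moreover have "q (gm f) \<le> ?c * Nsn U \<phi> ?m ?C f"
      using 2 by (intro order_trans[OF 2(3)[OF f] dominated]) auto
    ultimately show ?thesis by simp
  qed
  then show "\<exists>m C c. compactin X C \<and> C \<subseteq> V \<and>
      (\<forall>f. smooth_fun X Atl V f \<longrightarrow> max (p (gm f)) (q (gm f)) \<le> c * Nsn U \<phi> m C f)"
    using C by blast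
qed

sublocale germs: seminormed_calgebra G germ_seminorms
proof
  show "comm_unital_calgebra G" by (rule comm_unital_calgebra_germ_alg)
  show "germ_seminorms \<noteq> {}" using sup_norm_K_in_germ_seminorms by blast
  show "submult_seminorm G p" if "p \<in> germ_seminorms" for p
    by (rule germ_seminorms_submult[OF that])
qed

lemma lmc_algebra_germ_alg: "lmc_algebra G T"
  unfolding germ_top_eq
proof (rule germs.lmc_algebra_seminorm_topology)
  fix p q assume "p \<in> germ_seminorms" "q \<in> germ_seminorms"
  from germ_seminorms_max[OF this]
  show "\<exists>r\<in>germ_seminorms. \<forall>a\<in>ca_carrier G. p a \<le> r a \<and> q a \<le> r a"
    by (intro bexI[of _ "\<lambda>a. max (p a) (q a)"]) auto
qed

lemma openin_germ_rep_nonzero: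
  assumes a: "a \<in> ca_carrier G"
  obtains V where "openin X V" "K \<subseteq> V" "V \<subseteq> U" "smooth_fun X Atl V (germ_rep a)"
    "openin X {x \<in> V. germ_rep a x \<noteq> 0}"
proof -
  obtain V where V: "openin X V" "K \<subseteq> V" "V \<subseteq> U" "smooth_fun X Atl V (germ_rep a)"
    "continuous_map (subtopology X V) euclidean (germ_rep a)"
    using germ_rep_continuous_near_K[OF a] by metis
  have "openin (subtopology X V) {x \<in> topspace (subtopology X V). germ_rep a x \<in> - {0}}"
    by (rule openin_continuous_map_preimage[OF V(5)]) auto
  moreover have "{x \<in> topspace (subtopology X V). germ_rep a x \<in> - {0}} = {x \<in> V. germ_rep a x \<noteq> 0}"
    using openin_subset[OF V(1)] by auto
  ultimately show ?thesis using that V(1-4) openin_trans_full[OF _ V(1)] by metis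
qed

lemma germ_nonvanishing_near_K:
  assumes a: "a \<in> ca_carrier G" and nz: "\<And>x. x \<in> K \<Longrightarrow> germ_rep a x \<noteq> 0"
  obtains V where "openin X V" "K \<subseteq> V" "V \<subseteq> U" "smooth_fun X Atl V (germ_rep a)"
    "\<And>x. x \<in> V \<Longrightarrow> germ_rep a x \<noteq> 0"
proof -
  obtain V where V: "openin X V" "K \<subseteq> V" "V \<subseteq> U" "smooth_fun X Atl V (germ_rep a)"
    and V': "openin X {x \<in> V. germ_rep a x \<noteq> 0}"
    using openin_germ_rep_nonzero[OF a] by metis
  show ?thesis
  proof
    show "smooth_fun X Atl {x \<in> V. germ_rep a x \<noteq> 0} (germ_rep a)"
      by (rule smooth_fun_subset[OF V(4) V']) auto
  qed (use V' V(2,3) nz in auto)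
qed

lemma germ_invertible_iff:
  "a \<in> invertibles G \<longleftrightarrow> a \<in> ca_carrier G \<and> (\<forall>x\<in>K. germ_rep a x \<noteq> 0)"
proof safe
  fix x assume "a \<in> invertibles G" "x \<in> K" "germ_rep a x = 0"
  then obtain b where "a \<in> ca_carrier G" "b \<in> ca_carrier G" "ca_mul G a b = ca_one G"
    unfolding invertibles_def by blast
  then show False
    using germ_rep_mul_on_K[of a b x] germ_rep_one_on_K[of x] \<open>x \<in> K\<close> \<open>germ_rep a x = 0\<close> by simp
next
  assume a: "a \<in> ca_carrier G" and nz: "\<forall>x\<in>K. germ_rep a x \<noteq> 0"
  then obtain V where V: "openin X V" "K \<subseteq> V" "V \<subseteq> U" "smooth_fun X Atl V (germ_rep a)"
    "\<And>x. x \<in> V \<Longrightarrow> germ_rep a x \<noteq> 0"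
    using germ_nonvanishing_near_K by metis
  define b where "b = gm (\<lambda>x. inverse (germ_rep a x))"
  have inv: "smooth_near_K (\<lambda>x. inverse (germ_rep a x))"
    unfolding smooth_near_K_def using V smooth_fun_inverse[OF manifold V(4) V(5)] by blast
  have "ca_mul G a b = gm (\<lambda>x. germ_rep a x * inverse (germ_rep a x))"
    using germ_mul[OF smooth_near_K_germ_rep[OF a] inv] unfolding b_def germ_germ_rep[OF a] .
  also have "\<dots> = gm (\<lambda>x. 1)"
    by (rule germ_eq) (use V in \<open>auto simp: eventually_nhds_K\<close>)
  finally have "ca_mul G a b = ca_one G" by (simp add: germ_alg_simps(4))
  moreover have "b \<in> ca_carrier G"
    unfolding b_def by (rule germ_in_carrier[OF inv])
  ultimately show "a \<in> invertibles G"
    unfolding invertibles_def using a ca_mul_commute[OF comm_unital_calgebra_germ_alg a] by auto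
qed (simp add: invertibles_def)

lemma norm_germ_rep_gt_inverse_bound:
  assumes a: "a \<in> ca_carrier G" and b: "b \<in> ca_carrier G" and ab: "ca_mul G a b = ca_one G"
    and x: "x \<in> K"
  shows "1 / (sup_norm_K b + 1) < cmod (germ_rep a x)"
proof -
  have inv: "germ_rep a x * germ_rep b x = 1"
    using germ_rep_mul_on_K[OF a b x] germ_rep_one_on_K[OF x] ab by simp
  then have nb: "0 < cmod (germ_rep b x)" by auto
  have "1 / (sup_norm_K b + 1) < 1 / cmod (germ_rep b x)"
    using norm_germ_rep_le_sup_norm_K[OF b x] nb by (simp add: frac_less2)
  also have "\<dots> = cmod (germ_rep a x)"
    using inv nb by (metis nonzero_eq_divide_eq norm_mult norm_one order_less_irrefl)
  finally show ?thesis .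
qed

lemma Q_algebra_germ_alg: "Q_algebra G T"
  unfolding Q_algebra_def germ_top_eq
proof (subst openin_subopen, intro ballI)
  fix a assume "a \<in> invertibles G"
  then obtain b where a: "a \<in> ca_carrier G" and b: "b \<in> ca_carrier G"
    and ab: "ca_mul G a b = ca_one G"
    unfolding invertibles_def by blast
  define h where "h = 1 / (sup_norm_K b + 1)"
  have h: "h > 0" using sup_norm_K_nonneg[OF b] by (simp add: h_def)
  have "y \<in> invertibles G" if y: "y \<in> seminorm_ball G sup_norm_K a h" for y
  proof -
    have yC: "y \<in> ca_carrier G" and qy: "sup_norm_K (ca_sub G y a) < h"
      using y by (auto dest: germs.seminorm_ballD)
    have "germ_rep y x \<noteq> 0" if x: "x \<in> K" for x
    proof -
      have "cmod (germ_rep y x - germ_rep a x) < h"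
        using norm_germ_rep_le_sup_norm_K[OF ca_sub_closed[OF germs.calgebra yC a] x] qy
        by (simp add: germ_rep_sub_on_K[OF yC a x])
      then show ?thesis
        using norm_germ_rep_gt_inverse_bound[OF a b ab x]
          norm_triangle_ineq2[of "germ_rep a x" "germ_rep y x"]

        by (auto simp: h_def norm_minus_commute)
    qed
    then show ?thesis using yC by (simp add: germ_invertible_iff)
  qed
  then show "\<exists>W. openin (seminorm_topology G germ_seminorms) W \<and> a \<in> W \<and> W \<subseteq> invertibles G"
    using germs.openin_seminorm_ball[OF sup_norm_K_in_germ_seminorms a h]
      germs.centre_in_seminorm_ball[OF sup_norm_K_in_germ_seminorms a h] by blast
qed

lemma point_eval_eq: "a \<in> ca_carrier G \<Longrightarrow> point_eval X Atl U K x a = germ_rep a x"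
  unfolding point_eval_def by simp

lemma point_eval_character:
  assumes x: "x \<in> K"
  shows "point_eval X Atl U K x \<in> characters G T"
  unfolding characters_def germ_top_eq
proof (intro CollectI conjI ballI allI)
  show "point_eval X Atl U K x \<in> extensional (ca_carrier G)" by (simp add: point_eval_def)
  show "\<exists>a\<in>ca_carrier G. point_eval X Atl U K x a \<noteq> 0"
    using ca_one_closed[OF germs.calgebra] x
    by (intro bexI[of _ "ca_one G"]) (simp_all add: point_eval_eq germ_rep_one_on_K)
  show "continuous_map (seminorm_topology G germ_seminorms) euclidean (point_eval X Atl U K x)"
    by (rule germs.continuous_map_seminorm_bounded_functional[OF _ _ sup_norm_K_in_germ_seminorms])
      (simp_all add: point_eval_eq germs.carrier_closed germ_rep_ops_on_K x
        norm_germ_rep_le_sup_norm_K)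
  fix a b c assume a: "a \<in> ca_carrier G" and b: "b \<in> ca_carrier G"
  show "point_eval X Atl U K x (ca_add G a b) = point_eval X Atl U K x a + point_eval X Atl U K x b"
    "point_eval X Atl U K x (ca_mul G a b) = point_eval X Atl U K x a * point_eval X Atl U K x b"
    using a b x by (simp_all add: point_eval_eq germs.carrier_closed germ_rep_ops_on_K)
next
  fix c a assume "a \<in> ca_carrier G"
  then show "point_eval X Atl U K x (ca_scale G c a) = c * point_eval X Atl U K x a"
    using x by (simp add: point_eval_eq germs.carrier_closed germ_rep_ops_on_K)
qed

definition nonzero_region :: "('a \<Rightarrow> complex) set \<Rightarrow> 'a set" where
  "nonzero_region b = \<Union>{V. openin X V \<and> (\<forall>w\<in>V. germ_rep b w \<noteq> 0)}"

lemma openin_nonzero_region: "openin X (nonzero_region b)"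
  unfolding nonzero_region_def by (rule openin_Union) blast

lemma germ_rep_nonzero_region: "z \<in> nonzero_region b \<Longrightarrow> germ_rep b z \<noteq> 0"
  unfolding nonzero_region_def by blast

lemma mem_nonzero_region:
  assumes b: "b \<in> ca_carrier G" and "x \<in> K" "germ_rep b x \<noteq> 0"
  shows "x \<in> nonzero_region b"
proof -
  obtain V where V: "openin X V" "K \<subseteq> V" "openin X {z \<in> V. germ_rep b z \<noteq> 0}"
    using openin_germ_rep_nonzero[OF b] by metis
  then show ?thesis unfolding nonzero_region_def using assms(2,3) by blast
qed

lemma germ_norm_square:
  assumes b: "b \<in> ca_carrier G"
  obtains b' where "b' \<in> ca_carrier G"
    "\<And>z. z \<in> K \<Longrightarrow> germ_rep (ca_mul G b b') z = of_real ((cmod (germ_rep b z))\<^sup>2)"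
proof
  have cnj: "smooth_near_K (\<lambda>z. cnj (germ_rep b z))"
    by (rule smooth_near_K_cnj[OF smooth_near_K_germ_rep[OF b]])
  show "gm (\<lambda>z. cnj (germ_rep b z)) \<in> ca_carrier G" by (rule germ_in_carrier[OF cnj])
  fix z assume "z \<in> K"
  then show "germ_rep (ca_mul G b (gm (\<lambda>z. cnj (germ_rep b z)))) z =
      of_real ((cmod (germ_rep b z))\<^sup>2)"
    using b germ_in_carrier[OF cnj]
    by (simp add: germ_rep_mul_on_K germ_rep_on_K[OF cnj] flip: complex_norm_square)

qed

lemma character_kernel_sum_of_squares:
  assumes ch: "ch \<in> characters G T"
    and "finite F" "F \<subseteq> {b \<in> ca_carrier G. ch b = 0}"
  shows "\<exists>s\<in>ca_carrier G. ch s = 0 \<and> (\<forall>z\<in>K. Im (germ_rep s z) = 0 \<and> 0 \<le> Re (germ_rep s z)) \<and>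
    (\<forall>z\<in>K \<inter> \<Union>(nonzero_region ` F). 0 < Re (germ_rep s z))"
  using assms(2,3)
proof (induction F rule: finite_induct)
  case empty
  show ?case
    using ca_zero_closed[OF germs.calgebra] character_zero[OF germs.calgebra ch]
    by (intro bexI[of _ "ca_zero G"]) (simp_all add: germ_zero germ_rep_on_K smooth_near_K_const)
next
  case (insert b F)
  obtain s where s: "s \<in> ca_carrier G" "ch s = 0"
    "\<forall>z\<in>K. Im (germ_rep s z) = 0 \<and> 0 \<le> Re (germ_rep s z)"
    "\<forall>z\<in>K \<inter> \<Union>(nonzero_region ` F). 0 < Re (germ_rep s z)"
    using insert by blast
  have b: "b \<in> ca_carrier G" "ch b = 0" using insert.prems by auto
  obtain b' where b': "b' \<in> ca_carrier G"
    "\<And>z. z \<in> K \<Longrightarrow> germ_rep (ca_mul G b b') z = of_real ((cmod (germ_rep b z))\<^sup>2)"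
    using germ_norm_square[OF b(1)] by blast
  define s' where "s' = ca_add G s (ca_mul G b b')"
  have "s' \<in> ca_carrier G" unfolding s'_def by (intro germs.carrier_closed s b b')
  moreover have "ch s' = 0"
    unfolding s'_def using s b b'
    by (simp add: character_add[OF ch] character_mul[OF ch] germs.carrier_closed)

  moreover have s': "germ_rep s' z = germ_rep s z + of_real ((cmod (germ_rep b z))\<^sup>2)"
    if "z \<in> K" for z
    using that s b b' unfolding s'_def by (simp add: germ_rep_add_on_K germs.carrier_closed)
  moreover have "0 < Re (germ_rep s' z)" if z: "z \<in> K \<inter> \<Union>(nonzero_region ` insert b F)" for z
  proof -
    have "0 < Re (germ_rep s z) \<or> 0 < (cmod (germ_rep b z))\<^sup>2"
      using z s(4) germ_rep_nonzero_region[of z b] by auto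
    then show ?thesis using s' s(3) z by (auto intro: add_pos_nonneg add_nonneg_pos)
  qed
  ultimately show ?case using s(3) by (intro bexI[of _ s']) auto
qed

lemma character_kernel_common_zero:
  assumes ch: "ch \<in> characters G T"
  shows "\<exists>x\<in>K. \<forall>b\<in>ca_carrier G. ch b = 0 \<longrightarrow> germ_rep b x = 0"
proof (rule ccontr)
  define Z where "Z = {b \<in> ca_carrier G. ch b = 0}"
  assume "\<not> ?thesis"
  then have "K \<subseteq> \<Union>(nonzero_region ` Z)"
    unfolding Z_def using mem_nonzero_region by blast
  moreover have "\<forall>W\<in>nonzero_region ` Z. openin X W" using openin_nonzero_region by blast
  ultimately obtain FF where FF: "finite FF" "FF \<subseteq> nonzero_region ` Z" "K \<subseteq> \<Union>FF"
    using compact unfolding compactin_def by meson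
  then obtain F where F: "finite F" "F \<subseteq> Z" "K \<subseteq> \<Union>(nonzero_region ` F)"
    using finite_subset_image[OF FF(1,2)] by blast
  then obtain s where s: "s \<in> ca_carrier G" "ch s = 0" "\<forall>z\<in>K. 0 < Re (germ_rep s z)"
    using character_kernel_sum_of_squares[OF ch, of F] unfolding Z_def by blast
  then have "\<forall>z\<in>K. germ_rep s z \<noteq> 0" by fastforce
  with s(1) have "s \<in> invertibles G" by (simp add: germ_invertible_iff)
  then obtain t where t: "t \<in> ca_carrier G" "ca_mul G s t = ca_one G"
    unfolding invertibles_def by blast
  have "ch (ca_one G) = ch s * ch t" using character_mul[OF ch s(1) t(1)] t(2) by simp
  then show False using character_one[OF germs.calgebra ch] s(2) by simp
qed

lemma character_is_point_eval:
  assumes ch: "ch \<in> characters G T"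
  shows "\<exists>x\<in>K. ch = point_eval X Atl U K x"
proof -
  obtain x where x: "x \<in> K" "\<And>b. b \<in> ca_carrier G \<Longrightarrow> ch b = 0 \<Longrightarrow> germ_rep b x = 0"
    using character_kernel_common_zero[OF ch] by blast
  have "ch a = germ_rep a x" if a: "a \<in> ca_carrier G" for a
  proof -
    define b where "b = ca_sub G a (ca_scale G (ch a) (ca_one G))"
    have "b \<in> ca_carrier G" unfolding b_def by (intro germs.carrier_closed a)
    moreover have "ch b = 0"
      using a character_one[OF germs.calgebra ch]
      by (simp add: b_def ca_sub_def germs.carrier_closed character_add[OF ch]
          character_scale[OF ch])
    ultimately have "germ_rep b x = 0" by (rule x(2))
    then show ?thesis
      using a x(1)
      by (simp add: b_def germ_rep_sub_on_K germ_rep_scale_on_K germ_rep_one_on_K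
          germs.carrier_closed)
  qed
  then have "ch = point_eval X Atl U K x"
    using character_extensional[OF ch]
    by (intro extensionalityI[of _ "ca_carrier G"]) (simp_all add: point_eval_def)
  then show ?thesis using x(1) by blast
qed

lemma inj_on_point_eval: "inj_on (point_eval X Atl U K) K"
proof
  fix x y assume x: "x \<in> K" and y: "y \<in> K" and eq: "point_eval X Atl U K x = point_eval X Atl U K y"
  have "\<phi> x \<bullet> b = \<phi> y \<bullet> b" if "b \<in> Basis" for b
  proof -
    have f: "smooth_near_K (\<lambda>z. complex_of_real (\<phi> z \<bullet> b))"
      unfolding smooth_near_K_def
      using smooth_fun_chart_coordinate[OF manifold chart] openin_U K_subset by blast
    show ?thesis
      using fun_cong[OF eq, of "gm (\<lambda>z. complex_of_real (\<phi> z \<bullet> b))"] x y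
      by (simp add: point_eval_eq germ_in_carrier[OF f] germ_rep_on_K[OF f])
  qed
  then have "\<phi> x = \<phi> y" by (rule euclidean_eqI)
  then show "x = y"
    using is_chart_inj_on[OF smooth_manifold_chart[OF manifold chart]] x y K_subset
    by (auto dest: inj_onD)
qed

lemma homeomorphic_map_point_eval:
  "homeomorphic_map (subtopology X K) (spectrum_top G T) (point_eval X Atl U K)"
proof -
  have top: "topspace (subtopology X K) = K" using K_subset_topspace by auto
  have spec: "topspace (spectrum_top G T) = characters G T"
    unfolding spectrum_top_def characters_def by (auto simp: PiE_def)
  have cont: "continuous_map (subtopology X K) (spectrum_top G T) (point_eval X Atl U K)"
    unfolding spectrum_top_def
  proof (rule continuous_map_into_subtopology)
    show "continuous_map (subtopology X K) (product_topology (\<lambda>_. euclidean) (ca_carrier G))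
        (point_eval X Atl U K)"
      unfolding continuous_map_componentwise
      by (auto simp: point_eval_def intro: continuous_map_eq[OF continuous_map_germ_rep_K])
  qed (use point_eval_character top in auto)
  show ?thesis
  proof (rule bijective_closed_imp_homeomorphic_map[OF cont])
    show "closed_map (subtopology X K) (spectrum_top G T) (point_eval X Atl U K)"
      by (rule continuous_imp_closed_map[OF cont compact_space_subtopology[OF compact]
            Hausdorff_space_spectrum_top])
    show "point_eval X Atl U K ` topspace (subtopology X K) = topspace (spectrum_top G T)"
      unfolding top spec using point_eval_character character_is_point_eval by blast
  qed (use inj_on_point_eval top in simp)
qed

end

theorem proposition4p1:
  fixes X :: "'a topology" and Atl :: "('a set \<times> ('a \<Rightarrow> 'n::euclidean_space)) set"
    and U K :: "'a set" and \<phi> :: "'a \<Rightarrow> 'n"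
  assumes "smooth_manifold X Atl"
    and "(U, \<phi>) \<in> Atl"
    and "compactin X K" and "K \<subseteq> U"
  shows "lmc_algebra (germ_alg X Atl U K) (germ_top X Atl U \<phi> K) \<and>
         Q_algebra (germ_alg X Atl U K) (germ_top X Atl U \<phi> K) \<and>
         homeomorphic_map (subtopology X K)
           (spectrum_top (germ_alg X Atl U K) (germ_top X Atl U \<phi> K))
           (point_eval X Atl U K)"
proof -
  interpret compact_in_chart X Atl U K \<phi> using assms by unfold_locales
  show ?thesis using lmc_algebra_germ_alg Q_algebra_germ_alg homeomorphic_map_point_eval by blast
qed

end
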